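(* Let $p\in\mathbb{N}^*$, $H_0,H_1$ real symmetric $p\times p$ matrices, and assume there is $K\in\{1,\dots,p\}$ with $\langle H_1\varphi_1,\varphi_K\rangle=0$ and $a^1_K:=\langle[H_1,[H_0,H_1]]\varphi_1,\varphi_K\rangle\neq0$. Then there exists $C>0$ such that for all $a\in(0,|a^1_K|/8)$ there exists $T^*>0$ such that for all $T\in(0,T^* )$ there exists $\eta>0$ such that for all real $u\in L^1(0,T)$ with $\|u_1\|_{L^\infty(0,T)}<\eta$, the solution of $iX'=H_0X-u(t)H_1X$, $X(0)=\varphi_1$, satisfies $$-\operatorname{sign}(a^1_K)\Im\langle X(T),\varphi_Ke^{-i\lambda_1T}\rangle\ge a\|u_1\|^2_{L^2(0,T)}-C\|(X-X_1)(T)\|^2.$$ In particular the system is not $W^{-1,\infty}$-STLC.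
   Context: $(\varphi_1,\dots,\varphi_p)$ is a real orthonormal basis of eigenvectors of $H_0$ with eigenvalues $\lambda_1,\dots,\lambda_p$; $\langle\cdot,\cdot\rangle$ is the Hermitian product on $\mathbb{C}^p$; $[M,N]=MN-NM$; $X_1(t)=\varphi_1e^{-i\lambda_1t}$; $u_1(t)=\int_0^tu$. *)

theory Defs
  imports "HOL-Analysis.Analysis"
begin

definition cvec :: "real^'n \<Rightarrow> complex^'n" where
  "cvec v = (\<chi> i. complex_of_real (v $ i))"

definition cmat :: "real^'n^'m \<Rightarrow> complex^'n^'m" where
  "cmat M = (\<chi> i j. complex_of_real (M $ i $ j))"

definition herm :: "complex^'n \<Rightarrow> complex^'n \<Rightarrow> complex" where
  "herm x y = (\<Sum>i\<in>UNIV. x $ i * cnj (y $ i))"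

definition comm :: "real^'n^'n \<Rightarrow> real^'n^'n \<Rightarrow> real^'n^'n" where
  "comm M N = M ** N - N ** M"

text \<open>X is the (Caratheodory, i.e. absolutely continuous) solution on [0,T] of
  i X' = H0 X - u(t) H1 X, X(0) = x0, written in integral form.\<close>
definition is_solution ::
  "real^'n^'n \<Rightarrow> real^'n^'n \<Rightarrow> (real \<Rightarrow> real) \<Rightarrow> complex^'n \<Rightarrow> real \<Rightarrow> (real \<Rightarrow> complex^'n) \<Rightarrow> bool" where
  "is_solution H0 H1 u x0 T X \<longleftrightarrow>
     continuous_on {0..T} X \<and>
     (\<forall>t\<in>{0..T}.
        ((\<lambda>s. (- \<i>) *s (cmat H0 *v X s - complex_of_real (u s) *s (cmat H1 *v X s)))
           has_integral (X t - x0)) {0..t})"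

end

theory Submission
  imports Defs
begin

text \<open>
  With \<open>A = -i H\<^sub>0\<close> and \<open>B = i H\<^sub>1\<close>, both skew-adjoint, the system reads \<open>X' = (A + u B) X\<close>.
  The gauge transformation \<open>W = exp(-u\<^sub>1 B) X\<close> removes the control from the equation:
  \<open>W' = exp(-u\<^sub>1 B) A exp(u\<^sub>1 B) W\<close>. In the interaction picture \<open>Y = exp(-t A) W\<close> the generator
  becomes \<open>exp(-u\<^sub>1 B) A exp(u\<^sub>1 B) - A = u\<^sub>1 [A,B] + u\<^sub>1\<^sup>2/2 [[A,B],B] + O(u\<^sub>1\<^sup>3)\<close>.
  Projected on \<open>\<phi>\<^sub>K\<close>, the linear term vanishes because
  \<open>\<langle>[H\<^sub>0,H\<^sub>1]\<phi>\<^sub>1,\<phi>\<^sub>K\<rangle> = (\<lambda>\<^sub>K - \<lambda>\<^sub>1)\<langle>H\<^sub>1\<phi>\<^sub>1,\<phi>\<^sub>K\<rangle> = 0\<close>, while the quadratic term contributes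
  \<open>-a\<^sub>K/2 \<integral> u\<^sub>1\<^sup>2 cos((\<lambda>\<^sub>K - \<lambda>\<^sub>1)(t - T))\<close>, which dominates all errors when \<open>T\<close> and
  \<open>sup |u\<^sub>1|\<close> are small. Undoing the gauge at time \<open>T\<close> costs a term in \<open>u\<^sub>1(T)\<close>, and \<open>|u\<^sub>1(T)|\<close>
  is controlled by \<open>\<parallel>X(T) - X\<^sub>1(T)\<parallel>\<close> because \<open>\<parallel>B X\<^sub>1(T)\<parallel> = \<parallel>H\<^sub>1\<phi>\<^sub>1\<parallel> > 0\<close>.
\<close>

section \<open>Bounded endomorphisms of a Euclidean space as a Banach algebra\<close>

text \<open>The matrix exponential is taken in a real Banach algebra, so the bounded (real-linear)
  endomorphisms of a Euclidean space get their own type with composition as product.\<close>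

typedef (overloaded) ('a::euclidean_space) endo = "UNIV :: ('a \<Rightarrow>\<^sub>L 'a) set"
  morphisms blinfun_of_endo endo_of_blinfun by auto

setup_lifting type_definition_endo

instantiation endo :: (euclidean_space) real_normed_vector
begin
lift_definition norm_endo :: "'a endo \<Rightarrow> real" is norm .
lift_definition minus_endo :: "'a endo \<Rightarrow> 'a endo \<Rightarrow> 'a endo" is "(-)" .
lift_definition plus_endo :: "'a endo \<Rightarrow> 'a endo \<Rightarrow> 'a endo" is "(+)" .
lift_definition uminus_endo :: "'a endo \<Rightarrow> 'a endo" is "uminus" .
lift_definition zero_endo :: "'a endo" is "0" .
lift_definition scaleR_endo :: "real \<Rightarrow> 'a endo \<Rightarrow> 'a endo" is "scaleR" .
definition dist_endo :: "'a endo \<Rightarrow> 'a endo \<Rightarrow> real" where "dist_endo a b = norm (a - b)"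
definition sgn_endo :: "'a endo \<Rightarrow> 'a endo" where "sgn_endo x = scaleR (inverse (norm x)) x"
definition uniformity_endo :: "('a endo \<times> 'a endo) filter" where
  "uniformity_endo = (INF e\<in>{0 <..}. principal {(x, y). dist x y < e})"
definition open_endo :: "'a endo set \<Rightarrow> bool" where
  "open_endo S = (\<forall>x\<in>S. \<forall>\<^sub>F (x', y) in uniformity. x' = x \<longrightarrow> y \<in> S)"
instance
  apply standard
  unfolding dist_endo_def open_endo_def sgn_endo_def uniformity_endo_def
  apply (rule refl | (transfer, force simp: norm_triangle_ineq algebra_simps))+
  done
end

instantiation endo :: (euclidean_space) real_normed_algebra_1
begin
lift_definition times_endo :: "'a endo \<Rightarrow> 'a endo \<Rightarrow> 'a endo" is "(o\<^sub>L)" .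
lift_definition one_endo :: "'a endo" is "id_blinfun" .
instance
proof
  show "(0::'a endo) \<noteq> 1"
  proof transfer
    obtain b :: 'a where "b \<in> Basis" using nonempty_Basis by blast
    then have "b \<noteq> 0" by auto
    then show "(0::'a \<Rightarrow>\<^sub>L 'a) \<noteq> id_blinfun"
      by (metis blinfun_apply_id_blinfun blinfun.zero_left)
  qed
qed (transfer; auto intro!: blinfun_eqI simp: blinfun.bilinear_simps norm_blinfun_compose)+
end

lemma norm_blinfun_of_endo[simp]: "norm (blinfun_of_endo x) = norm x" by transfer simp
lemma blinfun_of_endo_diff: "blinfun_of_endo (x - y) = blinfun_of_endo x - blinfun_of_endo y" by transfer simp

instance endo :: (euclidean_space) banach
proof
  fix X :: "nat \<Rightarrow> 'a endo"
  assume C: "Cauchy X"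
  have "Cauchy (\<lambda>n. blinfun_of_endo (X n))"
  proof (rule metric_CauchyI)
    fix e :: real assume "0 < e"
    then obtain M where "\<forall>m\<ge>M. \<forall>n\<ge>M. dist (X m) (X n) < e" using C metric_CauchyD by blast
    then show "\<exists>M. \<forall>m\<ge>M. \<forall>n\<ge>M. dist (blinfun_of_endo (X m)) (blinfun_of_endo (X n)) < e"
      by (metis dist_norm dist_endo_def norm_blinfun_of_endo blinfun_of_endo_diff)
  qed
  then obtain L where L: "(\<lambda>n. blinfun_of_endo (X n)) \<longlonglongrightarrow> L"
    using Cauchy_convergent_iff convergent_def by blast
  have "X \<longlonglongrightarrow> endo_of_blinfun L"
  proof (rule LIMSEQ_I)
    fix r :: real assume "0 < r"
    then obtain N where N: "\<forall>n\<ge>N. norm (blinfun_of_endo (X n) - L) < r" using L LIMSEQ_D by blast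
    show "\<exists>no. \<forall>n\<ge>no. norm (X n - endo_of_blinfun L) < r"
    proof (intro exI allI impI)
      fix n assume "N \<le> n"
      then have "norm (blinfun_of_endo (X n) - blinfun_of_endo (endo_of_blinfun L)) < r" using N
        by (simp add: endo_of_blinfun_inverse)
      then show "norm (X n - endo_of_blinfun L) < r"
        by (simp only: blinfun_of_endo_diff[symmetric] norm_blinfun_of_endo)
    qed
  qed
  then show "convergent X" by (auto simp: convergent_def)
qed

definition endo_app :: "'a::euclidean_space endo \<Rightarrow> 'a \<Rightarrow> 'a" where
  "endo_app S x = blinfun_apply (blinfun_of_endo S) x"

definition endo_of_fun :: "('a::euclidean_space \<Rightarrow> 'a) \<Rightarrow> 'a endo" where
  "endo_of_fun f = endo_of_blinfun (Blinfun f)"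

lemma endo_app_of_fun: "bounded_linear f \<Longrightarrow> endo_app (endo_of_fun f) x = f x"
  by (simp add: endo_app_def endo_of_fun_def endo_of_blinfun_inverse bounded_linear_Blinfun_apply)

lemma endo_app_mult: "endo_app (S * T) x = endo_app S (endo_app T x)"
  unfolding endo_app_def by transfer simp
lemma endo_app_one[simp]: "endo_app 1 x = x"
  unfolding endo_app_def by transfer simp
lemma endo_app_zero[simp]: "endo_app 0 x = 0"
  unfolding endo_app_def by transfer simp
lemma endo_app_add_left: "endo_app (S + T) x = endo_app S x + endo_app T x"
  unfolding endo_app_def by transfer (simp add: blinfun.bilinear_simps)
lemma endo_app_diff_left: "endo_app (S - T) x = endo_app S x - endo_app T x"
  unfolding endo_app_def by transfer (simp add: blinfun.bilinear_simps)
lemma endo_app_minus_left: "endo_app (- S) x = - endo_app S x"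
  unfolding endo_app_def by transfer (simp add: blinfun.bilinear_simps)
lemma endo_app_scaleR_left: "endo_app (r *\<^sub>R S) x = r *\<^sub>R endo_app S x"
  unfolding endo_app_def by transfer (simp add: blinfun.bilinear_simps)
lemma endo_app_norm: "norm (endo_app S x) \<le> norm S * norm x"
  unfolding endo_app_def by transfer (rule norm_blinfun)

lemma bounded_bilinear_endo_app: "bounded_bilinear endo_app"
proof
  fix a a' :: "'a endo" and b b' :: 'a and r :: real
  show "endo_app (a + a') b = endo_app a b + endo_app a' b" by (rule endo_app_add_left)
  show "endo_app a (b + b') = endo_app a b + endo_app a b'" unfolding endo_app_def by (simp add: blinfun.bilinear_simps)
  show "endo_app (r *\<^sub>R a) b = r *\<^sub>R endo_app a b" by (rule endo_app_scaleR_left)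
  show "endo_app a (r *\<^sub>R b) = r *\<^sub>R endo_app a b" unfolding endo_app_def
    by (simp add: blinfun.bilinear_simps)
  show "\<exists>K. \<forall>a b. norm (endo_app a b) \<le> norm a * norm b * K"
    by (rule exI[where x=1]) (simp add: endo_app_norm)
qed

interpretation endo_app: bounded_bilinear endo_app by (rule bounded_bilinear_endo_app)

lemma norm_endo_app_endo_app_le: "norm (endo_app S (endo_app R x)) \<le> norm S * norm R * norm x"
  by (metis endo_app_mult endo_app_norm norm_mult_ineq mult_right_mono norm_ge_zero order_trans)

lemma endo_app_zero_right[simp]: "endo_app S 0 = 0" by (rule endo_app.zero_right)

lemma endo_app_exp_scaleR_solution:
  assumes y: "\<And>t. (y has_vector_derivative endo_app S (y t)) (at t)"
  shows "endo_app (exp (t *\<^sub>R S)) (y 0) = y t"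
proof -
  define z where "z t = endo_app (exp (t *\<^sub>R (- S))) (y t)" for t
  have "(z has_vector_derivative 0) (at t)" for t
  proof -
    have "(z has_vector_derivative endo_app (exp (t *\<^sub>R (- S))) (endo_app S (y t))
        + endo_app (- S * exp (t *\<^sub>R (- S))) (y t)) (at t)"
      unfolding z_def by (rule endo_app.has_vector_derivative[OF exp_scaleR_has_vector_derivative_left y])
    moreover have "- S * exp (t *\<^sub>R (- S)) = - (exp (t *\<^sub>R (- S)) * S)"
      using exp_times_scaleR_commute[of t "- S"] by simp
    moreover have "S * exp (- (t *\<^sub>R S)) = exp (- (t *\<^sub>R S)) * S"
      using exp_times_scaleR_commute[of t "- S"] by simp
    then have "endo_app S (endo_app (exp (- (t *\<^sub>R S))) w) = endo_app (exp (- (t *\<^sub>R S))) (endo_app S w)" for w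
      by (metis endo_app_mult)
    ultimately show ?thesis by (simp add: endo_app_minus_left endo_app_mult)
  qed
  then have "z t = z 0"
    by (metis DERIV_isconst_all has_real_derivative_iff_has_vector_derivative
        has_vector_derivative_zero_constant UNIV_I convex_UNIV)
  then have "endo_app (exp (t *\<^sub>R S)) (z t) = endo_app (exp (t *\<^sub>R S)) (y 0)"
    by (simp add: z_def)
  moreover have "endo_app (exp (t *\<^sub>R S)) (z t) = y t"
    unfolding z_def endo_app_mult[symmetric] using exp_minus_inverse[of "t *\<^sub>R S"] by simp
  ultimately show ?thesis by simp
qed

definition skew :: "'a::euclidean_space endo \<Rightarrow> bool" where
  "skew S \<longleftrightarrow> (\<forall>x y. endo_app S x \<bullet> y = - (x \<bullet> endo_app S y))"

lemma skew_minus: "skew S \<Longrightarrow> skew (- S)"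
  by (simp add: skew_def endo_app_minus_left)

lemma skew_exp_inner:
  assumes "skew S"
  shows "endo_app (exp (t *\<^sub>R S)) x \<bullet> endo_app (exp (t *\<^sub>R S)) y = x \<bullet> y"
proof -
  define f where "f t = endo_app (exp (t *\<^sub>R S)) x \<bullet> endo_app (exp (t *\<^sub>R S)) y" for t
  have d: "((\<lambda>t. endo_app (exp (t *\<^sub>R S)) z) has_vector_derivative endo_app S (endo_app (exp (t *\<^sub>R S)) z)) (at t)" for z t
    using endo_app.has_vector_derivative[OF exp_scaleR_has_vector_derivative_left[of S t] has_vector_derivative_const[of z]]
    by (simp add: endo_app_mult)
  have "(f has_real_derivative 0) (at t)" for t
  proof -
    have "(f has_vector_derivative
       (endo_app (exp (t *\<^sub>R S)) x \<bullet> endo_app S (endo_app (exp (t *\<^sub>R S)) y) + endo_app S (endo_app (exp (t *\<^sub>R S)) x) \<bullet> endo_app (exp (t *\<^sub>R S)) y)) (at t)"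
      unfolding f_def by (rule bounded_bilinear.has_vector_derivative[OF bounded_bilinear_inner d d])
    moreover have "endo_app (exp (t *\<^sub>R S)) x \<bullet> endo_app S (endo_app (exp (t *\<^sub>R S)) y)
        + endo_app S (endo_app (exp (t *\<^sub>R S)) x) \<bullet> endo_app (exp (t *\<^sub>R S)) y = 0"
      using assms unfolding skew_def by simp
    ultimately show ?thesis by (simp add: has_real_derivative_iff_has_vector_derivative)
  qed
  then have "f t = f 0" by (metis DERIV_isconst_all)
  then show ?thesis by (simp add: f_def)
qed

lemma skew_exp_norm:
  assumes "skew S"
  shows "norm (endo_app (exp (t *\<^sub>R S)) x) = norm x"
  using skew_exp_inner[OF assms, of t x x] by (simp add: norm_eq_sqrt_inner)

lemma skew_exp_adj:
  assumes "skew S"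
  shows "endo_app (exp (t *\<^sub>R S)) x \<bullet> y = x \<bullet> endo_app (exp ((- t) *\<^sub>R S)) y"
proof -
  have "y = endo_app (exp (t *\<^sub>R S)) (endo_app (exp ((- t) *\<^sub>R S)) y)"
    by (simp add: endo_app_mult[symmetric] exp_minus_inverse)
  then have "endo_app (exp (t *\<^sub>R S)) x \<bullet> y = endo_app (exp (t *\<^sub>R S)) x \<bullet> endo_app (exp (t *\<^sub>R S)) (endo_app (exp ((- t) *\<^sub>R S)) y)"
    by simp
  also have "\<dots> = x \<bullet> endo_app (exp ((- t) *\<^sub>R S)) y" by (rule skew_exp_inner[OF assms])
  finally show ?thesis .
qed

section \<open>Elementary real analysis\<close>

lemma norm_le_pow_if_derivative_le:
  fixes f :: "real \<Rightarrow> 'b::real_normed_vector"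
  assumes f0: "f 0 = 0"
    and d: "\<And>y. y \<in> {-1..1} \<Longrightarrow> (f has_vector_derivative f' y) (at y)"
    and b: "\<And>y. y \<in> {-1..1} \<Longrightarrow> norm (f' y) \<le> K * \<bar>y\<bar> ^ n"
    and z: "z \<in> {-1..1}"
  shows "norm (f z) \<le> K * \<bar>z\<bar> ^ (Suc n)"
proof -
  let ?S = "closed_segment 0 z"
  have sub: "?S \<subseteq> {-1..1}"
    using z by (auto simp: closed_segment_eq_real_ivl split: if_splits)
  have K0: "0 \<le> K" using b[of 1] by (auto intro: order_trans[OF norm_ge_zero])
  have "norm (f z - f 0) \<le> (K * \<bar>z\<bar> ^ n) * norm (z - 0)"
  proof (rule differentiable_bound[where f' = "\<lambda>y h. h *\<^sub>R f' y"])
    show "convex ?S" by simp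
    fix x assume x: "x \<in> ?S"
    then have "x \<in> {-1..1}" using sub by auto
    then show "(f has_derivative (\<lambda>h. h *\<^sub>R f' x)) (at x within ?S)"
      using d has_derivative_at_withinI has_vector_derivative_def by blast
    have "\<bar>x\<bar> \<le> \<bar>z\<bar>" using x by (auto simp: closed_segment_eq_real_ivl split: if_splits)
    then have "K * \<bar>x\<bar> ^ n \<le> K * \<bar>z\<bar> ^ n"
      using K0 by (intro mult_left_mono power_mono) auto
    then show "onorm (\<lambda>h. h *\<^sub>R f' x) \<le> K * \<bar>z\<bar> ^ n"
      using onorm_scaleR_left[OF bounded_linear_ident, of "f' x"] onorm_id[where 'a=real] b[OF \<open>x \<in> {-1..1}\<close>]
      by simp
  qed auto
  then show ?thesis using f0 by (simp add: mult_ac)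
qed

lemma norm_increment_le_if_local:
  fixes \<Psi> :: "real \<Rightarrow> 'b::real_normed_vector"
  assumes T: "0 \<le> T" and h: "0 < h"
    and loc: "\<And>s t. 0 \<le> s \<Longrightarrow> s \<le> t \<Longrightarrow> t \<le> T \<Longrightarrow> t - s < h \<Longrightarrow> norm (\<Psi> t - \<Psi> s) \<le> e * (G t - G s)"
  shows "norm (\<Psi> T - \<Psi> 0) \<le> e * (G T - G 0)"
proof -
  obtain N :: nat where N: "T / h < real N" using reals_Archimedean2 by blast
  then have Npos: "N > 0" using T h by (metis divide_nonneg_pos of_nat_0_less_iff order_le_less_trans)
  define p where "p k = real k * T / real N" for k
  have step: "p (Suc k) - p k < h" for k
    using N h Npos by (simp add: p_def field_simps)
  have "norm (\<Psi> (p k) - \<Psi> 0) \<le> e * (G (p k) - G 0)" if "k \<le> N" for k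
    using that
  proof (induction k)
    case 0
    then show ?case by (simp add: p_def)
  next
    case (Suc k)
    have "real (Suc k) * T \<le> real N * T" using Suc.prems T by (intro mult_right_mono) auto
    then have "0 \<le> p k" "p k \<le> p (Suc k)" "p (Suc k) \<le> T"
      using T Npos by (auto simp: p_def field_simps)
    then have "norm (\<Psi> (p (Suc k)) - \<Psi> (p k)) \<le> e * (G (p (Suc k)) - G (p k))"
      using loc step by blast
    with Suc show ?case
      using norm_triangle_ineq[of "\<Psi> (p (Suc k)) - \<Psi> (p k)" "\<Psi> (p k) - \<Psi> 0"]
        by (simp add: algebra_simps)
  qed
  from this[of N] Npos show ?thesis by (simp add: p_def)
qed

lemma eq_zero_if_increments_small:
  fixes \<Psi> :: "real \<Rightarrow> 'b::real_normed_vector"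
  assumes T: "0 \<le> T" and \<Psi>0: "\<Psi> 0 = 0"
    and G: "\<And>s t. 0 \<le> s \<Longrightarrow> s \<le> t \<Longrightarrow> t \<le> T \<Longrightarrow> G s \<le> G t"
    and loc: "\<And>e. e > 0 \<Longrightarrow> \<exists>h>0. \<forall>s t. 0 \<le> s \<longrightarrow> s \<le> t \<longrightarrow> t \<le> T \<longrightarrow> t - s < h \<longrightarrow>
                 norm (\<Psi> t - \<Psi> s) \<le> e * (G t - G s)"
  shows "\<Psi> T = 0"
proof -
  have GT: "G 0 \<le> G T" using G T by auto
  have "norm (\<Psi> T) \<le> e" if e: "e > 0" for e
  proof -
    define e' where "e' = e / (G T - G 0 + 1)"
    have "e' > 0" using e GT by (simp add: e'_def)
    then obtain h where "h > 0" and "\<forall>s t. 0 \<le> s \<longrightarrow> s \<le> t \<longrightarrow> t \<le> T \<longrightarrow> t - s < h \<longrightarrow>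
        norm (\<Psi> t - \<Psi> s) \<le> e' * (G t - G s)"
      using loc by blast
    then have "norm (\<Psi> T) \<le> e' * (G T - G 0)"
      using norm_increment_le_if_local[OF T, of h \<Psi> e' G] \<Psi>0 by simp
    also have "\<dots> \<le> e" using e GT by (simp add: e'_def field_simps)
    finally show ?thesis .
  qed
  then show ?thesis by (metis dual_order.refl field_le_epsilon norm_le_zero_iff add_0)
qed

lemma continuous_on_interval_bounded:
  fixes f :: "real \<Rightarrow> 'b::real_normed_vector"
  assumes "continuous_on {a..b} f"
  obtains M where "M \<ge> 0" "\<And>t. t \<in> {a..b} \<Longrightarrow> norm (f t) \<le> M"
proof -
  have "bounded (f ` {a..b})" by (rule compact_imp_bounded[OF compact_continuous_image[OF assms]]) simp
  then obtain M where "\<forall>x\<in>f ` {a..b}. norm x \<le> M" by (auto simp: bounded_iff)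
  then show ?thesis using that[of "max M 0"] by force
qed

lemma continuous_on_interval_uniformly:
  fixes f :: "real \<Rightarrow> 'b::real_normed_vector"
  assumes "continuous_on {a..b} f" "e > 0"
  obtains d where "d > 0" "\<And>x y. x \<in> {a..b} \<Longrightarrow> y \<in> {a..b} \<Longrightarrow> \<bar>y - x\<bar> < d \<Longrightarrow> norm (f y - f x) < e"
proof -
  have "uniformly_continuous_on {a..b} f" by (rule compact_uniformly_continuous[OF assms(1)]) simp
  then obtain d where "d > 0" "\<forall>x\<in>{a..b}. \<forall>y\<in>{a..b}. dist y x < d \<longrightarrow> dist (f y) (f x) < e"
    using assms(2) unfolding uniformly_continuous_on_def by metis
  then show ?thesis using that[of d] by (auto simp: dist_norm)
qed

lemma integral_abs_sq_le:
  fixes f :: "real \<Rightarrow> real"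
  assumes f: "continuous_on {a..b} f" and ab: "a < b"
  shows "(integral {a..b} (\<lambda>r. \<bar>f r\<bar>))\<^sup>2 \<le> (b - a) * integral {a..b} (\<lambda>r. (f r)\<^sup>2)"
proof -
  define L1 where "L1 = integral {a..b} (\<lambda>r. \<bar>f r\<bar>)"
  define L2 where "L2 = integral {a..b} (\<lambda>r. (f r)\<^sup>2)"
  define m where "m = L1 / (b - a)"
  have int1: "(\<lambda>r. \<bar>f r\<bar>) integrable_on {a..b}" and int2: "(\<lambda>r. (f r)\<^sup>2) integrable_on {a..b}"
    by (intro integrable_continuous_interval continuous_intros f)+
  have "((\<lambda>r. (f r)\<^sup>2 - (2 * m) * \<bar>f r\<bar> + m\<^sup>2) has_integral L2 - (2 * m) * L1 + m\<^sup>2 * (b - a)) {a..b}"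
    unfolding L1_def L2_def using has_integral_const_real[of "m\<^sup>2" a b] ab
    by (intro has_integral_add has_integral_diff has_integral_mult_right integrable_integral int1 int2)
      (auto simp: mult.commute)
  moreover have "(\<lambda>r. (f r)\<^sup>2 - (2 * m) * \<bar>f r\<bar> + m\<^sup>2) = (\<lambda>r. (\<bar>f r\<bar> - m)\<^sup>2)"
    by (simp add: fun_eq_iff power2_eq_square algebra_simps)
  ultimately have "0 \<le> L2 - (2 * m) * L1 + m\<^sup>2 * (b - a)"
    by (metis has_integral_nonneg zero_le_power2)
  moreover have md: "m * (b - a) = L1" using ab by (simp add: m_def)
  ultimately have "0 \<le> (b - a) * (L2 - (2 * m) * (m * (b - a)) + m\<^sup>2 * (b - a))"
    using ab by simp
  also have "\<dots> = (b - a) * L2 - (m * (b - a))\<^sup>2" by (simp add: power2_eq_square algebra_simps)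
  finally show ?thesis by (simp add: md L1_def L2_def)
qed

lemma cos_ge_1_minus_abs: "cos (x::real) \<ge> 1 - \<bar>x\<bar>"
proof -
  define w where "w = sin (x / 2)"
  have c: "cos x = 1 - 2 * w\<^sup>2" using cos_double_sin[of "x/2"] by (simp add: w_def)
  have "w\<^sup>2 = \<bar>w\<bar> * \<bar>w\<bar>" by (simp add: power2_eq_square)
  also have "\<dots> \<le> 1 * \<bar>w\<bar>" using abs_sin_le_one[of "x/2"]
    by (intro mult_right_mono) (auto simp: w_def)
  finally have a: "w\<^sup>2 \<le> \<bar>w\<bar>" by simp
  have b: "\<bar>w\<bar> \<le> \<bar>x\<bar> / 2" using abs_sin_x_le_abs_x[of "x/2"] by (simp add: w_def)
  show ?thesis using a b c by linarith
qed

lemma cis_mult_cnj: "cis a * cnj (\<i> * cis b * cis c * cis d) = - \<i> * cis (a - b - c - d)"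
proof -
  have "cnj (\<i> * cis b * cis c * cis d) = - \<i> * cis (- b) * cis (- c) * cis (- d)"
    by (simp add: cis_cnj)
  moreover have "cis a * cis (- b) * cis (- c) * cis (- d) = cis (a - b - c - d)"
    by (simp add: cis_mult)
  ultimately show ?thesis by (simp add: mult_ac)
qed

section \<open>Taylor expansions in real Banach algebras\<close>

lemma exp_scaleR_add: "exp ((a + b) *\<^sub>R S) = exp (a *\<^sub>R S) * exp (b *\<^sub>R S)"
  by (simp add: scaleR_add_left exp_add_commuting[symmetric])

lemma continuous_on_exp_scaleR: "continuous_on UNIV (\<lambda>z. exp (z *\<^sub>R (S::'a::{real_normed_algebra_1,banach})))"
  using exp_scaleR_has_vector_derivative_right[of S] by (meson continuous_on_vector_derivative)

lemma continuous_on_exp_scaleR_comp: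
  fixes S :: "'a::{real_normed_algebra_1,banach}"
  assumes "continuous_on D g"
  shows "continuous_on D (\<lambda>t. exp (g t *\<^sub>R S))"
  using continuous_on_compose2[OF continuous_on_exp_scaleR assms] by auto

lemma norm_exp_scaleR_le:
  fixes S :: "'a::{real_normed_algebra_1,banach}"
  assumes "\<bar>y\<bar> \<le> 1"
  shows "norm (exp (y *\<^sub>R S)) \<le> exp (norm S)"
proof -
  have "norm (exp (y *\<^sub>R S)) \<le> exp (norm (y *\<^sub>R S))" by (rule norm_exp)
  also have "norm (y *\<^sub>R S) \<le> norm S" using assms
    by (simp add: mult_left_le_one_le)
  then have "exp (norm (y *\<^sub>R S)) \<le> exp (norm S)" by simp
  finally show ?thesis .
qed

lemma norm_exp_scaleR_minus_one_le:
  fixes S :: "'a::{real_normed_algebra_1,banach}"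
  assumes "\<bar>y\<bar> \<le> 1"
  shows "norm (exp (y *\<^sub>R S) - 1) \<le> (exp (norm S) * norm S) * \<bar>y\<bar>"
proof -
  have "norm (exp (y *\<^sub>R S) - 1) \<le> (exp (norm S) * norm S) * \<bar>y\<bar> ^ Suc 0"
  proof (rule norm_le_pow_if_derivative_le[where f = "\<lambda>y. exp (y *\<^sub>R S) - 1" and f' = "\<lambda>y. exp (y *\<^sub>R S) * S"])
    fix z :: real assume z: "z \<in> {-1..1}"
    show "((\<lambda>y. exp (y *\<^sub>R S) - 1) has_vector_derivative exp (z *\<^sub>R S) * S) (at z)"
      using exp_scaleR_has_vector_derivative_right[of S z UNIV] by (auto intro!: derivative_eq_intros)
    have "norm (exp (z *\<^sub>R S) * S) \<le> norm (exp (z *\<^sub>R S)) * norm S" by (rule norm_mult_ineq)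
    also have "\<dots> \<le> exp (norm S) * norm S"
      using norm_exp_scaleR_le[of z S] z by (intro mult_right_mono) auto
    finally show "norm (exp (z *\<^sub>R S) * S) \<le> exp (norm S) * norm S * \<bar>z\<bar> ^ 0" by simp
  qed (use assms in auto)
  then show ?thesis by simp
qed

lemma norm_exp_scaleR_taylor_le:
  fixes S :: "'a::{real_normed_algebra_1,banach}"
  assumes "\<bar>y\<bar> \<le> 1"
  shows "norm (exp (y *\<^sub>R S) - 1 - y *\<^sub>R S) \<le> (exp (norm S) * norm S * norm S) * \<bar>y\<bar>\<^sup>2"
proof -
  have "norm (exp (y *\<^sub>R S) - 1 - y *\<^sub>R S) \<le> (exp (norm S) * norm S * norm S) * \<bar>y\<bar> ^ Suc 1"
  proof (rule norm_le_pow_if_derivative_le[where f = "\<lambda>y. exp (y *\<^sub>R S) - 1 - y *\<^sub>R S"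
      and f' = "\<lambda>y. (exp (y *\<^sub>R S) - 1) * S"])
    fix z :: real assume z: "z \<in> {-1..1}"
    show "((\<lambda>y. exp (y *\<^sub>R S) - 1 - y *\<^sub>R S) has_vector_derivative (exp (z *\<^sub>R S) - 1) * S) (at z)"
      using exp_scaleR_has_vector_derivative_right[of S z UNIV]
      by (auto intro!: derivative_eq_intros simp: algebra_simps)
    have "norm ((exp (z *\<^sub>R S) - 1) * S) \<le> norm (exp (z *\<^sub>R S) - 1) * norm S" by (rule norm_mult_ineq)
    also have "\<dots> \<le> ((exp (norm S) * norm S) * \<bar>z\<bar>) * norm S"
      using norm_exp_scaleR_minus_one_le[of z S] z by (intro mult_right_mono) auto
    finally show "norm ((exp (z *\<^sub>R S) - 1) * S) \<le> exp (norm S) * norm S * norm S * \<bar>z\<bar> ^ 1"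
      by (simp add: mult_ac)
  qed (use assms in auto)
  then show ?thesis by (simp add: power2_eq_square)
qed

definition conj_exp :: "'a::{real_normed_algebra_1,banach} \<Rightarrow> 'a \<Rightarrow> real \<Rightarrow> 'a" where
  "conj_exp S D z = exp (z *\<^sub>R (- S)) * D * exp (z *\<^sub>R S)"

definition commutator :: "'a::ring \<Rightarrow> 'a \<Rightarrow> 'a" where
  "commutator M N = M * N - N * M"

lemma conj_exp_deriv: "((conj_exp S D) has_vector_derivative conj_exp S (commutator D S) z) (at z)"
proof -
  have d1: "((\<lambda>z. exp (z *\<^sub>R (- S))) has_vector_derivative exp (z *\<^sub>R (- S)) * (- S)) (at z)"
    by (rule exp_scaleR_has_vector_derivative_right)
  have d2: "((\<lambda>z. exp (z *\<^sub>R S)) has_vector_derivative S * exp (z *\<^sub>R S)) (at z)"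
    by (rule exp_scaleR_has_vector_derivative_left)
  have "((\<lambda>z. exp (z *\<^sub>R (- S)) * D * exp (z *\<^sub>R S)) has_vector_derivative
      (exp (z *\<^sub>R (- S)) * D * (S * exp (z *\<^sub>R S)) + exp (z *\<^sub>R (- S)) * (- S) * D * exp (z *\<^sub>R S))) (at z)"
    using has_vector_derivative_mult[OF has_vector_derivative_mult_left[OF d1, of D] d2]
    by (simp add: mult.assoc)
  moreover have "exp (z *\<^sub>R (- S)) * D * (S * exp (z *\<^sub>R S)) + exp (z *\<^sub>R (- S)) * (- S) * D * exp (z *\<^sub>R S)
     = conj_exp S (commutator D S) z"
    by (simp add: conj_exp_def commutator_def algebra_simps)
  ultimately show ?thesis unfolding conj_exp_def[abs_def] by simp
qed

lemma conj_exp_0[simp]: "conj_exp S D 0 = D"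
  by (simp add: conj_exp_def)

lemma norm_conj_exp_le:
  assumes "\<bar>z\<bar> \<le> 1"
  shows "norm (conj_exp S D z) \<le> exp (norm S) * exp (norm S) * norm D"
proof -
  have "norm (conj_exp S D z) \<le> norm (exp (z *\<^sub>R (- S))) * norm D * norm (exp (z *\<^sub>R S))"
    unfolding conj_exp_def by (meson norm_mult_ineq order_trans mult_right_mono norm_ge_zero)
  also have "\<dots> \<le> exp (norm S) * norm D * exp (norm S)"
    using norm_exp_scaleR_le[OF assms, of "- S"] norm_exp_scaleR_le[OF assms, of S]
    by (intro mult_mono) auto
  finally show ?thesis by (simp add: mult_ac)
qed

lemma norm_conj_exp_minus_le:
  assumes "\<bar>z\<bar> \<le> 1"
  shows "norm (conj_exp S D z - D) \<le> (exp (norm S) * exp (norm S) * norm (commutator D S)) * \<bar>z\<bar>"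
proof -
  have "norm (conj_exp S D z - D) \<le> (exp (norm S) * exp (norm S) * norm (commutator D S)) * \<bar>z\<bar> ^ Suc 0"
  proof (rule norm_le_pow_if_derivative_le[where f = "\<lambda>z. conj_exp S D z - D"
      and f' = "conj_exp S (commutator D S)"])
    fix y :: real assume "y \<in> {-1..1}"
    then show "norm (conj_exp S (commutator D S) y)
        \<le> exp (norm S) * exp (norm S) * norm (commutator D S) * \<bar>y\<bar> ^ 0"
      using norm_conj_exp_le[of y S "commutator D S"] by (auto simp: abs_le_iff)
    show "((\<lambda>z. conj_exp S D z - D) has_vector_derivative conj_exp S (commutator D S) y) (at y)"
      using conj_exp_deriv[of S D y] by (auto intro!: derivative_eq_intros)
  qed (use assms in auto)
  then show ?thesis by simp
qed

lemma norm_conj_exp_taylor_le: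
  assumes "\<bar>z\<bar> \<le> 1"
  shows "norm (conj_exp S D z - D - z *\<^sub>R commutator D S - (z\<^sup>2 / 2) *\<^sub>R commutator (commutator D S) S)
     \<le> (exp (norm S) * exp (norm S) * norm (commutator (commutator (commutator D S) S) S)) * \<bar>z\<bar> ^ 3"
proof -
  define k where "k = exp (norm S) * exp (norm S) * norm (commutator (commutator (commutator D S) S) S)"
  have b2: "norm (conj_exp S (commutator (commutator D S) S) y - commutator (commutator D S) S)
      \<le> k * \<bar>y\<bar> ^ 1" if "y \<in> {-1..1}" for y
    using norm_conj_exp_minus_le[of y S "commutator (commutator D S) S"] that by (simp add: k_def abs_le_iff)
  have b1: "norm (conj_exp S (commutator D S) y - commutator D S - y *\<^sub>R commutator (commutator D S) S)
      \<le> k * \<bar>y\<bar> ^ Suc 1"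
    if "y \<in> {-1..1}" for y
  proof (rule norm_le_pow_if_derivative_le[where f' = "\<lambda>y. conj_exp S (commutator (commutator D S) S) y
      - commutator (commutator D S) S"])
    fix w :: real assume "w \<in> {-1..1}"
    show "((\<lambda>y. conj_exp S (commutator D S) y - commutator D S - y *\<^sub>R commutator (commutator D S) S) has_vector_derivative
        conj_exp S (commutator (commutator D S) S) w - commutator (commutator D S) S) (at w)"
      using conj_exp_deriv[of S "commutator D S" w] by (auto intro!: derivative_eq_intros)
  qed (use b2 that in auto)
  have "norm (conj_exp S D z - D - z *\<^sub>R commutator D S - (z\<^sup>2 / 2) *\<^sub>R commutator (commutator D S) S)
      \<le> k * \<bar>z\<bar> ^ Suc 2"
  proof (rule norm_le_pow_if_derivative_le[where f' = "\<lambda>y. conj_exp S (commutator D S) y - commutator D S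
      - y *\<^sub>R commutator (commutator D S) S"])
    fix w :: real assume "w \<in> {-1..1}"
    show "((\<lambda>z. conj_exp S D z - D - z *\<^sub>R commutator D S - (z\<^sup>2 / 2) *\<^sub>R commutator (commutator D S) S) has_vector_derivative
        conj_exp S (commutator D S) w - commutator D S - w *\<^sub>R commutator (commutator D S) S) (at w)"
      using conj_exp_deriv[of S D w]
      by (auto intro!: derivative_eq_intros simp: power2_eq_square)
  next
    fix y :: real assume "y \<in> {-1..1}"
    then show "norm (conj_exp S (commutator D S) y - commutator D S - y *\<^sub>R commutator (commutator D S) S)
        \<le> k * \<bar>y\<bar> ^ 2"
      using b1[of y] by (simp add: power2_eq_square)
  qed (use assms in auto)
  then show ?thesis by (simp add: k_def)
qed

section \<open>Complexified vectors and matrices\<close>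

lemma scaleR_cvec_comp: "((r::real) *\<^sub>R (x::complex^'n)) $ i = complex_of_real r * x $ i"
  unfolding vector_scaleR_component by (rule scaleR_conv_of_real)

lemma inner_complex_eq_Re_mult_cnj: "(z::complex) \<bullet> w = Re (z * cnj w)"
  by (simp add: inner_complex_def)

lemma inner_eq_Re_herm: "(x::complex^'n) \<bullet> y = Re (herm x y)"
  by (simp add: inner_vec_def herm_def inner_complex_eq_Re_mult_cnj Re_sum)

lemma herm_scale_left: "herm (c *s x) y = c * herm x y"
  by (simp add: herm_def sum_distrib_left mult.assoc)

lemma herm_scale_right: "herm x (c *s y) = cnj c * herm x y"
  by (simp add: herm_def sum_distrib_left mult_ac)

lemma Im_herm: "Im (herm x y) = (x::complex^'n) \<bullet> (\<i> *s y)"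
  by (simp add: inner_eq_Re_herm herm_scale_right)

lemma herm_minus_left: "herm (- x) y = - herm x y"
  by (simp add: herm_def sum_negf)

lemma herm_cvec: "herm (cvec a) (cvec b) = complex_of_real (a \<bullet> b)"
  by (simp add: herm_def cvec_def inner_vec_def)

lemma cmat_cvec: "cmat M *v cvec a = cvec (M *v a)"
  by (simp add: cmat_def cvec_def matrix_vector_mult_def vec_eq_iff)

lemma cmat_scale: "cmat M *v (c *s x) = c *s (cmat M *v x)"
  by (simp add: matrix_vector_mult_def vec_eq_iff sum_distrib_left mult_ac)

lemma cmat_mult: "cmat M *v (cmat N *v x) = cmat (M ** N) *v x"
  by (simp add: cmat_def matrix_vector_mul_assoc matrix_matrix_mult_def vec_eq_iff sum_distrib_left
      sum_distrib_right)

lemma cmat_diff: "cmat (M - N) *v x = cmat M *v x - cmat N *v x"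
  by (simp add: cmat_def matrix_vector_mult_def vec_eq_iff left_diff_distrib sum_subtractf)

lemma herm_sym:
  assumes "transpose M = M"
  shows "herm (cmat M *v x) y = herm x (cmat M *v y)"
proof -
  have s: "M $ i $ j = M $ j $ i" for i j
  proof -
    have "M $ i $ j = transpose M $ i $ j" using assms by simp
    then show ?thesis by (simp add: transpose_def)
  qed
  have "herm (cmat M *v x) y = (\<Sum>i\<in>UNIV. \<Sum>j\<in>UNIV. complex_of_real (M $ i $ j) * x $ j * cnj (y $ i))"
    by (simp add: herm_def cmat_def matrix_vector_mult_def sum_distrib_right)
  also have "\<dots> = (\<Sum>j\<in>UNIV. \<Sum>i\<in>UNIV. complex_of_real (M $ i $ j) * x $ j * cnj (y $ i))"
    by (rule sum.swap)
  also have "\<dots> = herm x (cmat M *v y)"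
    by (simp add: herm_def cmat_def matrix_vector_mult_def sum_distrib_left s mult_ac)
  finally show ?thesis .
qed

lemma norm_cvec: "norm (cvec a) = norm a"
  by (simp add: norm_vec_def cvec_def)

lemma bounded_linear_cmat: "bounded_linear (\<lambda>x::complex^'n. c *s (cmat M *v x))"
proof -
  have "linear (\<lambda>x::complex^'n. c *s (cmat M *v x))"
    by (rule linearI) (simp_all add: vec_eq_iff matrix_vector_mult_def sum.distrib distrib_left
        sum_distrib_left scaleR_cvec_comp mult_ac del: vector_scaleR_component)
  then show ?thesis by (simp add: linear_conv_bounded_linear)
qed

lemma bounded_linear_scalar_mult_vector: "bounded_linear (\<lambda>w::complex. w *s (v::complex^'n))"
proof -
  have "linear (\<lambda>w::complex. w *s v)"
  proof (rule linearI)
    fix b1 b2 :: complex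
    show "(b1 + b2) *s v = b1 *s v + b2 *s v" by (simp add: vec_eq_iff distrib_right)
  next
    fix r :: real and b :: complex
    show "(r *\<^sub>R b) *s v = r *\<^sub>R (b *s v)"
      unfolding vec_eq_iff by (simp add: scaleR_cvec_comp del: vector_scaleR_component) (simp add: scaleR_conv_of_real)
  qed
  then show ?thesis by (simp add: linear_conv_bounded_linear)
qed

lemma norm_vector_scalar_mult: "norm (c *s (x::complex^'n)) = norm c * norm x"
  by (simp add: norm_vec_def norm_mult L2_set_right_distrib)

lemma symmetric_matrix_inner:
  fixes M :: "real^'n^'n"
  assumes "transpose M = M"
  shows "(M *v x) \<bullet> y = x \<bullet> (M *v y)"
proof -
  have "M *v x = x v* M" using assms transpose_matrix_vector by metis
  then show ?thesis by (simp add: dot_lmul_matrix)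
qed

section \<open>The spectral setting\<close>

locale spectral_setting =
  fixes H0 H1 :: "real^'n^'n"
    and \<phi> :: "'n \<Rightarrow> real^'n"
    and lam :: "'n \<Rightarrow> real"
    and i1 K :: 'n
  assumes symH0: "transpose H0 = H0"
    and symH1: "transpose H1 = H1"
    and orth: "\<forall>i j. \<phi> i \<bullet> \<phi> j = (if i = j then 1 else 0)"
    and eig: "\<forall>i. H0 *v \<phi> i = lam i *\<^sub>R \<phi> i"
    and hK0: "(H1 *v \<phi> i1) \<bullet> \<phi> K = 0"
    and hK1: "(comm H1 (comm H0 H1) *v \<phi> i1) \<bullet> \<phi> K \<noteq> 0"
begin

definition A :: "(complex^'n) endo" where "A = endo_of_fun (\<lambda>x. (- \<i>) *s (cmat H0 *v x))"
definition B :: "(complex^'n) endo" where "B = endo_of_fun (\<lambda>x. \<i> *s (cmat H1 *v x))"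
definition aK :: real where "aK = (comm H1 (comm H0 H1) *v \<phi> i1) \<bullet> \<phi> K"
definition C1 :: "(complex^'n) endo" where "C1 = commutator A B"
definition C2 :: "(complex^'n) endo" where "C2 = commutator C1 B"

text \<open>Remainder constants, for \<open>|z| \<le> 1\<close>, of the expansions of \<open>pert z\<close> below to orders 0 and 2
  (\<open>k1\<close>, \<open>k3\<close>) and of \<open>exp (z *\<^sub>R B)\<close> to order 1 (\<open>cr\<close>); \<open>Ldev\<close>, \<open>Cdev\<close> and \<open>Cerr\<close> are the
  constants of the final estimate.\<close>

definition nB where "nB = norm B"
definition k1 where "k1 = exp nB * exp nB * norm C1"
definition k3 where "k3 = exp nB * exp nB * norm (commutator C2 B)"
definition cr where "cr = exp nB * nB * nB"
definition beta where "beta = norm (H1 *v \<phi> i1)"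
definition gap where "gap = \<bar>lam K - lam i1\<bar>"

definition Ldev where "Ldev = k1 * (1 + nB)"
definition Cdev where "Cdev = (cr + 1/2) * 8 / beta\<^sup>2"
definition Cerr where "Cerr = k1 * k1 + (nB * k1)\<^sup>2 / 2 + Cdev * Ldev\<^sup>2"

lemma constants_nonneg:
  "nB \<ge> 0" "k1 \<ge> 0" "k3 \<ge> 0" "cr \<ge> 0" "beta \<ge> 0" "gap \<ge> 0" "Ldev \<ge> 0" "Cdev \<ge> 0" "Cerr \<ge> 0"
  by (auto simp: nB_def k1_def k3_def cr_def beta_def gap_def Ldev_def Cdev_def Cerr_def)

lemma beta_pos: "beta > 0"
proof (rule ccontr)
  assume "\<not> beta > 0"
  then have z: "H1 *v \<phi> i1 = 0" using constants_nonneg by (simp add: beta_def)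
  have "comm H1 (comm H0 H1) *v \<phi> i1 = 0"
    by (simp add: comm_def matrix_vector_mult_diff_rdistrib matrix_vector_mul_assoc[symmetric] z eig
        matrix_vector_mult_scaleR)
  then show False using hK1 by simp
qed

definition pert where "pert z = conj_exp B A z - A" for z

lemma norm_pert_le: "\<bar>z\<bar> \<le> 1 \<Longrightarrow> norm (pert z) \<le> k1 * \<bar>z\<bar>"
  using norm_conj_exp_minus_le[of z B A] by (simp add: pert_def k1_def nB_def C1_def)

lemma norm_pert_taylor_le: "\<bar>z\<bar> \<le> 1 \<Longrightarrow> norm (pert z - z *\<^sub>R C1 - (z\<^sup>2 / 2) *\<^sub>R C2) \<le> k3 * \<bar>z\<bar> ^ 3"
  using norm_conj_exp_taylor_le[of z B A] by (simp add: pert_def k3_def nB_def C1_def C2_def)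

lemma A_app: "endo_app A x = (- \<i>) *s (cmat H0 *v x)"
  unfolding A_def by (rule endo_app_of_fun[OF bounded_linear_cmat])
lemma B_app: "endo_app B x = \<i> *s (cmat H1 *v x)"
  unfolding B_def by (rule endo_app_of_fun[OF bounded_linear_cmat])

lemma skew_cmat:
  assumes "transpose M = M" and "\<And>x. endo_app S x = c *s (cmat M *v x)" and "cnj c = - c"
  shows "skew S"
  unfolding skew_def
proof (intro allI)
  fix x y
  have "endo_app S x \<bullet> y = Re (c * herm x (cmat M *v y))"
    by (simp add: assms(2) inner_eq_Re_herm herm_scale_left herm_sym[OF assms(1)])
  moreover have "x \<bullet> endo_app S y = Re (cnj c * herm x (cmat M *v y))"
    by (simp add: assms(2) inner_eq_Re_herm herm_scale_right)
  ultimately show "endo_app S x \<bullet> y = - (x \<bullet> endo_app S y)" using assms(3) by simp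
qed

lemma skew_A: "skew A" by (rule skew_cmat[OF symH0 A_app]) simp
lemma skew_B: "skew B" by (rule skew_cmat[OF symH1 B_app]) simp

lemma skew_self: "skew S \<Longrightarrow> endo_app S x \<bullet> x = 0"
  unfolding skew_def by (metis inner_commute add.inverse_unique add_eq_0_iff2 neg_equal_zero)

lemma A_app_scalar: "endo_app A (c *s x) = c *s endo_app A x"
  by (simp add: A_app cmat_scale vector_smult_assoc mult.commute)
lemma B_app_scalar: "endo_app B (c *s x) = c *s endo_app B x"
  by (simp add: B_app cmat_scale vector_smult_assoc mult.commute)

lemma norm_cvec_phi: "norm (cvec (\<phi> j)) = 1"
proof -
  have "\<phi> j \<bullet> \<phi> j = 1" using orth by simp
  then have "norm (\<phi> j) = 1" by (simp add: norm_eq_sqrt_inner)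
  then show ?thesis by (simp add: norm_cvec)
qed

lemma A_app_phi: "endo_app A (c *s cvec (\<phi> j)) = (c * (- \<i> * complex_of_real (lam j))) *s cvec (\<phi> j)"
proof -
  have "cmat H0 *v cvec (\<phi> j) = cvec (lam j *\<^sub>R \<phi> j)"
    using eig by (simp add: cmat_cvec)
  also have "\<dots> = complex_of_real (lam j) *s cvec (\<phi> j)"
    by (simp add: cvec_def vec_eq_iff)
  finally have "cmat H0 *v cvec (\<phi> j) = complex_of_real (lam j) *s cvec (\<phi> j)" .
  then have "endo_app A (cvec (\<phi> j)) = ((- \<i>) * complex_of_real (lam j)) *s cvec (\<phi> j)"
    by (simp only: A_app vector_smult_assoc)
  then show ?thesis by (simp only: A_app_scalar vector_smult_assoc)
qed

lemma exp_A_phi: "endo_app (exp (t *\<^sub>R A)) (c *s cvec (\<phi> j)) = (c * cis (- lam j * t)) *s cvec (\<phi> j)"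
proof -
  define y where "y t = (c * cis (- lam j * t)) *s cvec (\<phi> j)" for t
  have "((\<lambda>t. c * cis (- lam j * t)) has_vector_derivative (c * (- \<i> * complex_of_real (lam j)) * cis (- lam j * t))) (at t)"
    for t
  proof -
    have "((\<lambda>t. cis (- lam j * t)) has_derivative (\<lambda>h. (h * (- lam j)) *\<^sub>R (\<i> * cis (- lam j * t)))) (at t)"
      by (rule has_derivative_cis) (auto intro!: derivative_eq_intros)
    then have "((\<lambda>t. cis (- lam j * t)) has_vector_derivative (- lam j) *\<^sub>R (\<i> * cis (- lam j * t))) (at t)"
      by (simp add: has_vector_derivative_def mult.commute)
    from has_vector_derivative_mult_right[OF this, of c] show ?thesis
      by (simp add: scaleR_conv_of_real mult_ac)
  qed
  then have "(y has_vector_derivative (c * (- \<i> * complex_of_real (lam j)) * cis (- lam j * t)) *s cvec (\<phi> j)) (at t)"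
    for t
    unfolding y_def by (rule bounded_linear.has_vector_derivative[OF bounded_linear_scalar_mult_vector])
  moreover have "endo_app A (y t) = (c * (- \<i> * complex_of_real (lam j)) * cis (- lam j * t)) *s cvec (\<phi> j)" for t
    unfolding y_def by (simp add: A_app_phi mult_ac)
  ultimately have "(y has_vector_derivative endo_app A (y t)) (at t)" for t
    by simp
  from endo_app_exp_scaleR_solution[OF this] show ?thesis by (simp add: y_def)
qed

lemma C1_app: "endo_app C1 x = cmat (comm H0 H1) *v x"
proof -
  have "endo_app C1 x = endo_app A (endo_app B x) - endo_app B (endo_app A x)"
    by (simp add: C1_def commutator_def endo_app_diff_left endo_app_mult)
  also have "endo_app A (endo_app B x) = cmat (H0 ** H1) *v x"
    by (simp only: A_app B_app cmat_scale vector_smult_assoc cmat_mult) simp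
  also have "endo_app B (endo_app A x) = cmat (H1 ** H0) *v x"
    by (simp only: A_app B_app cmat_scale vector_smult_assoc cmat_mult) simp
  finally show ?thesis by (simp add: comm_def cmat_diff)
qed

lemma C2_app: "endo_app C2 x = (- \<i>) *s (cmat (comm H1 (comm H0 H1)) *v x)"
proof -
  have "endo_app C2 x = \<i> *s (cmat (comm H0 H1 ** H1) *v x) - \<i> *s (cmat (H1 ** comm H0 H1) *v x)"
    by (simp add: C2_def commutator_def endo_app_diff_left endo_app_mult C1_app B_app cmat_scale cmat_mult)
  also have "\<dots> = (- \<i>) *s (cmat (comm H1 (comm H0 H1)) *v x)"
    by (simp add: comm_def cmat_diff vector_ssub_ldistrib vec_eq_iff algebra_simps)
  finally show ?thesis .
qed

lemma C1_app_scalar: "endo_app C1 (a *s x) = a *s endo_app C1 x"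
  by (simp add: C1_app cmat_scale)
lemma C2_app_scalar: "endo_app C2 (a *s x) = a *s endo_app C2 x"
  by (simp add: C2_app cmat_scale vector_smult_assoc mult.commute)

lemma herm_C1_phi_K: "herm (endo_app C1 (cvec (\<phi> i1))) (cvec (\<phi> K)) = 0"
proof -
  have "(comm H0 H1 *v \<phi> i1) \<bullet> \<phi> K = (H0 *v (H1 *v \<phi> i1)) \<bullet> \<phi> K - (H1 *v (H0 *v \<phi> i1)) \<bullet> \<phi> K"
    by (simp add: comm_def matrix_vector_mult_diff_rdistrib matrix_vector_mul_assoc[symmetric] inner_diff_left)
  also have "(H0 *v (H1 *v \<phi> i1)) \<bullet> \<phi> K = lam K * ((H1 *v \<phi> i1) \<bullet> \<phi> K)"
    using eig by (simp add: symmetric_matrix_inner[OF symH0])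
  also have "(H1 *v (H0 *v \<phi> i1)) \<bullet> \<phi> K = lam i1 * ((H1 *v \<phi> i1) \<bullet> \<phi> K)"
    using eig by (simp add: matrix_vector_mult_scaleR)
  finally have "(comm H0 H1 *v \<phi> i1) \<bullet> \<phi> K = 0" using hK0 by simp
  then show ?thesis by (simp add: C1_app cmat_cvec herm_cvec)
qed

lemma herm_C2_phi_K: "herm (endo_app C2 (cvec (\<phi> i1))) (cvec (\<phi> K)) = - \<i> * complex_of_real aK"
  by (simp add: C2_app cmat_cvec herm_scale_left herm_cvec aK_def vector_smult_lneg herm_minus_left)

lemma herm_B_phi_K: "herm (endo_app B (cvec (\<phi> i1))) (cvec (\<phi> K)) = 0"
  by (simp add: B_app cmat_cvec herm_scale_left herm_cvec hK0)

end

section \<open>Trajectories and the gauge transformation\<close>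

locale trajectory = spectral_setting H0 H1 \<phi> lam i1 K
  for H0 H1 :: "real^'n^'n" and \<phi> lam i1 K +
  fixes T :: real and u :: "real \<Rightarrow> real" and X :: "real \<Rightarrow> complex^'n"
  assumes Tpos: "0 < T"
    and u_abs_integrable: "u absolutely_integrable_on {0..T}"
    and sol: "is_solution H0 H1 u (cvec (\<phi> i1)) T X"
begin

definition x0 where "x0 = cvec (\<phi> i1)"
definition rhs where "rhs r = endo_app A (X r) + u r *\<^sub>R endo_app B (X r)" for r
definition u1 where "u1 t = integral {0..t} u" for t
definition U where "U t = integral {0..t} (\<lambda>r. \<bar>u r\<bar>)" for t
definition gauge where "gauge t = exp (u1 t *\<^sub>R (- B))" for t

lemma X_cont: "continuous_on {0..T} X"
  using sol by (simp add: is_solution_def)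

lemma rhs_eq: "(- \<i>) *s (cmat H0 *v X s - complex_of_real (u s) *s (cmat H1 *v X s)) = rhs s"
  by (simp add: rhs_def A_app B_app vec_eq_iff scaleR_cvec_comp algebra_simps del: vector_scaleR_component)

lemma rhs_has_integral: "t \<in> {0..T} \<Longrightarrow> (rhs has_integral (X t - x0)) {0..t}"
  using sol unfolding is_solution_def x0_def rhs_eq by blast

lemma u_abs_integrable_sub: "{a..b} \<subseteq> {0..T} \<Longrightarrow> u absolutely_integrable_on {a..b}"
  by (rule absolutely_integrable_on_subinterval[OF u_abs_integrable]) auto

lemma u_integrable: "{a..b} \<subseteq> {0..T} \<Longrightarrow> u integrable_on {a..b}"
  using u_abs_integrable_sub by (simp add: absolutely_integrable_on_def)

lemma abs_u_integrable: "{a..b} \<subseteq> {0..T} \<Longrightarrow> (\<lambda>r. \<bar>u r\<bar>) integrable_on {a..b}"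
  using u_abs_integrable_sub by (simp add: absolutely_integrable_on_def)

lemma u1_cont: "continuous_on {0..T} u1"
  unfolding u1_def by (rule indefinite_integral_continuous_1[OF u_integrable]) simp

lemma u1_diff: "0 \<le> s \<Longrightarrow> s \<le> t \<Longrightarrow> t \<le> T \<Longrightarrow> u1 t - u1 s = integral {s..t} u"
  unfolding u1_def using Henstock_Kurzweil_Integration.integral_combine[of 0 s t u] u_integrable[of 0 t] by auto

lemma U_diff: "0 \<le> s \<Longrightarrow> s \<le> t \<Longrightarrow> t \<le> T \<Longrightarrow> U t - U s = integral {s..t} (\<lambda>r. \<bar>u r\<bar>)"
  unfolding U_def using Henstock_Kurzweil_Integration.integral_combine[of 0 s t "\<lambda>r. \<bar>u r\<bar>"] abs_u_integrable[of 0 t] by auto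

lemma U_mono: "0 \<le> s \<Longrightarrow> s \<le> t \<Longrightarrow> t \<le> T \<Longrightarrow> U s \<le> U t"
  using U_diff[of s t] integral_nonneg[OF abs_u_integrable[of s t]] by force

lemma u1_diff_bound: "0 \<le> s \<Longrightarrow> s \<le> t \<Longrightarrow> t \<le> T \<Longrightarrow> \<bar>u1 t - u1 s\<bar> \<le> U t - U s"
proof -
  assume st: "0 \<le> s" "s \<le> t" "t \<le> T"
  have "norm (integral {s..t} u) \<le> integral {s..t} (\<lambda>r. \<bar>u r\<bar>)"
    by (rule integral_norm_bound_integral[OF u_integrable abs_u_integrable]) (use st in auto)
  then show ?thesis using u1_diff[OF st] U_diff[OF st] by simp
qed

lemma gauge_cont: "continuous_on {0..T} gauge"
  unfolding gauge_def by (rule continuous_on_exp_scaleR_comp[OF u1_cont])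

lemma A_X_cont: "continuous_on {0..T} (\<lambda>r. endo_app A (X r))"
  by (intro endo_app.continuous_on continuous_intros X_cont)

lemma X_diff: "0 \<le> s \<Longrightarrow> s \<le> t \<Longrightarrow> t \<le> T \<Longrightarrow> X t - X s = integral {s..t} rhs"
proof -
  assume st: "0 \<le> s" "s \<le> t" "t \<le> T"
  have it: "rhs integrable_on {0..t}" using rhs_has_integral[of t] st by (auto simp: integrable_on_def)
  have "X t - x0 = integral {0..t} rhs" using rhs_has_integral[of t] st by (simp add: integral_unique)
  moreover have "X s - x0 = integral {0..s} rhs" using rhs_has_integral[of s] st by (simp add: integral_unique)
  ultimately show ?thesis using Henstock_Kurzweil_Integration.integral_combine[OF st(1,2) it]
    by (simp add: algebra_simps)
qed

lemma u1_0: "u1 0 = 0" by (simp add: u1_def)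
lemma gauge_0: "gauge 0 = 1" by (simp add: gauge_def u1_0)
lemma X_0: "X 0 = x0"
proof -
  have "(rhs has_integral X 0 - x0) {0}" using rhs_has_integral[of 0] Tpos by simp
  then have "X 0 - x0 = 0" using has_integral_unique has_integral_refl(2) by blast
  then show ?thesis by simp
qed

lemma rhs_integrable: "{a..b} \<subseteq> {0..T} \<Longrightarrow> rhs integrable_on {a..b}"
  using rhs_has_integral[of T] Tpos integrable_subinterval_real[of rhs 0 T a b]
  by (auto simp: integrable_on_def)

lemma gauge_A_X_cont: "continuous_on {0..T} (\<lambda>r. endo_app (gauge r) (endo_app A (X r)))"
  by (intro endo_app.continuous_on gauge_cont A_X_cont)

lemma gauge_A_X_integrable: "{a..b} \<subseteq> {0..T} \<Longrightarrow> (\<lambda>r. endo_app (gauge r) (endo_app A (X r))) integrable_on {a..b}"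
  by (rule integrable_continuous_interval) (use gauge_A_X_cont continuous_on_subset in blast)

definition W where "W t = endo_app (gauge t) (X t)" for t

text \<open>Since \<open>u\<close> is merely integrable, \<open>X\<close> is only absolutely continuous and no product rule
  applies to \<open>W\<close>. Instead, the defect below is shown to vanish because its increments over short
  intervals are small compared to those of \<open>t + U t\<close>: the first order part of the gauge increment
  cancels the control term of the equation, and the rest is small by continuity or of second order.\<close>

definition gauge_defect where
  "gauge_defect t = W t - x0 - integral {0..t} (\<lambda>r. endo_app (gauge r) (endo_app A (X r)))" for t

lemma gauge_defect_0: "gauge_defect 0 = 0"
  by (simp add: gauge_defect_def W_def gauge_0 X_0)

lemma gauge_shift: "gauge t = gauge s * exp ((u1 t - u1 s) *\<^sub>R (- B))"
  using exp_scaleR_add[of "u1 s" "u1 t - u1 s" "- B"] by (simp add: gauge_def)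

lemma gauge_defect_diff:
  assumes s0: "0 \<le> s" and st: "s \<le> t" and tT: "t \<le> T"
  shows "gauge_defect t - gauge_defect s = endo_app (gauge t) (X t - X s) + endo_app (gauge t - gauge s) (X s)
    - integral {s..t} (\<lambda>r. endo_app (gauge r) (endo_app A (X r)))"
proof -
  have "integral {0..t} (\<lambda>r. endo_app (gauge r) (endo_app A (X r)))
      = integral {0..s} (\<lambda>r. endo_app (gauge r) (endo_app A (X r)))
        + integral {s..t} (\<lambda>r. endo_app (gauge r) (endo_app A (X r)))"
    using Henstock_Kurzweil_Integration.integral_combine[OF s0 st gauge_A_X_integrable[of 0 t]] tT by simp
  then show ?thesis
    unfolding gauge_defect_def W_def by (simp add: endo_app_diff_left endo_app.diff_right algebra_simps)
qed

lemma gauge_defect_increment: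
  assumes s0: "0 \<le> s" and st: "s \<le> t" and tT: "t \<le> T"
  shows "((\<lambda>r. endo_app (gauge t - gauge r) (endo_app A (X r))
      + u r *\<^sub>R (endo_app (gauge t - gauge s) (endo_app B (X r)) + endo_app (gauge s) (endo_app B (X r - X s))))
    has_integral gauge_defect t - gauge_defect s
      - endo_app (gauge s) (endo_app (exp ((u1 t - u1 s) *\<^sub>R (- B)) - 1 - (u1 t - u1 s) *\<^sub>R (- B)) (X s))) {s..t}"
proof -
  have sub: "{s..t} \<subseteq> {0..T}" using s0 tT by auto
  define \<delta> where "\<delta> = u1 t - u1 s"
  define c where "c = endo_app (gauge s) (endo_app B (X s))"
  have "((\<lambda>r. endo_app (gauge t) (rhs r)) has_integral endo_app (gauge t) (X t - X s)) {s..t}"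
    using has_integral_linear[OF integrable_integral[OF rhs_integrable[OF sub]] endo_app.bounded_linear_right]
    by (simp add: o_def X_diff[OF s0 st tT])
  moreover have "((\<lambda>r. endo_app (gauge r) (endo_app A (X r))) has_integral
      integral {s..t} (\<lambda>r. endo_app (gauge r) (endo_app A (X r)))) {s..t}"
    by (rule integrable_integral[OF gauge_A_X_integrable[OF sub]])
  moreover have "((\<lambda>r. u r *\<^sub>R c) has_integral \<delta> *\<^sub>R c) {s..t}"
    using has_integral_scaleR_left[OF integrable_integral[OF u_integrable[OF sub]], of c]
    by (simp add: u1_diff[OF s0 st tT] \<delta>_def)
  ultimately have "((\<lambda>r. endo_app (gauge t) (rhs r) - endo_app (gauge r) (endo_app A (X r)) - u r *\<^sub>R c)
      has_integral endo_app (gauge t) (X t - X s) - integral {s..t} (\<lambda>r. endo_app (gauge r) (endo_app A (X r)))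
        - \<delta> *\<^sub>R c) {s..t}"
    by (intro has_integral_diff)
  moreover have "(\<lambda>r. endo_app (gauge t) (rhs r) - endo_app (gauge r) (endo_app A (X r)) - u r *\<^sub>R c)
    = (\<lambda>r. endo_app (gauge t - gauge r) (endo_app A (X r))
      + u r *\<^sub>R (endo_app (gauge t - gauge s) (endo_app B (X r)) + endo_app (gauge s) (endo_app B (X r - X s))))"
    by (simp add: fun_eq_iff rhs_def c_def endo_app_diff_left endo_app.diff_right endo_app.add_right
        endo_app.scaleR_right algebra_simps)
  moreover have "endo_app (gauge t) (X t - X s) - integral {s..t} (\<lambda>r. endo_app (gauge r) (endo_app A (X r)))
      - \<delta> *\<^sub>R c = gauge_defect t - gauge_defect s - (endo_app (gauge t - gauge s) (X s) + \<delta> *\<^sub>R c)"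
    by (simp add: gauge_defect_diff[OF s0 st tT])
  moreover have "endo_app (gauge t - gauge s) (X s) + \<delta> *\<^sub>R c
      = endo_app (gauge s) (endo_app (exp (\<delta> *\<^sub>R (- B)) - 1 - \<delta> *\<^sub>R (- B)) (X s))"
    using gauge_shift[of t s]
    by (simp add: \<delta>_def c_def endo_app_diff_left endo_app_mult endo_app.diff_right endo_app.scaleR_right
        endo_app_scaleR_left endo_app_minus_left endo_app.minus_right algebra_simps endo_app_add_left endo_app.add_right)
  ultimately show ?thesis
    unfolding \<delta>_def by simp
qed

lemma norm_gauge_defect_integrand_le:
  assumes r: "r \<in> {s..t}" and s0: "0 \<le> s" and tT: "t \<le> T" and e0: "0 \<le> \<epsilon>"
    and MX: "\<And>r. r \<in> {0..T} \<Longrightarrow> norm (X r) \<le> MX"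
    and MG: "\<And>r. r \<in> {0..T} \<Longrightarrow> norm (gauge r) \<le> MG"
    and close: "\<And>r. r \<in> {s..t} \<Longrightarrow> norm (gauge t - gauge r) \<le> \<epsilon> \<and> norm (X r - X s) \<le> \<epsilon>"
  shows "norm (endo_app (gauge t - gauge r) (endo_app A (X r))
      + u r *\<^sub>R (endo_app (gauge t - gauge s) (endo_app B (X r)) + endo_app (gauge s) (endo_app B (X r - X s))))
    \<le> \<epsilon> * norm A * MX + \<bar>u r\<bar> * (\<epsilon> * nB * MX + MG * nB * \<epsilon>)"
proof -
  have rT: "r \<in> {0..T}" and sT: "s \<in> {0..T}" and ss: "s \<in> {s..t}" using r s0 tT by auto
  have MG0: "0 \<le> MG" using MG[OF sT] by (auto intro: order_trans[OF norm_ge_zero])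
  have "norm (endo_app (gauge t - gauge r) (endo_app A (X r))) \<le> norm (gauge t - gauge r) * norm A * norm (X r)"
    by (rule norm_endo_app_endo_app_le)
  also have "\<dots> \<le> \<epsilon> * norm A * MX"
    using close[OF r] MX[OF rT] e0 by (intro mult_mono mult_right_mono) auto
  finally have n1: "norm (endo_app (gauge t - gauge r) (endo_app A (X r))) \<le> \<epsilon> * norm A * MX" .
  have "norm (endo_app (gauge t - gauge s) (endo_app B (X r))) \<le> norm (gauge t - gauge s) * nB * norm (X r)"
    unfolding nB_def by (rule norm_endo_app_endo_app_le)
  also have "\<dots> \<le> \<epsilon> * nB * MX"
    using close[OF ss] MX[OF rT] e0 constants_nonneg by (intro mult_mono mult_right_mono) auto
  finally have n2: "norm (endo_app (gauge t - gauge s) (endo_app B (X r))) \<le> \<epsilon> * nB * MX" .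
  have "norm (endo_app (gauge s) (endo_app B (X r - X s))) \<le> norm (gauge s) * nB * norm (X r - X s)"
    unfolding nB_def by (rule norm_endo_app_endo_app_le)
  also have "\<dots> \<le> MG * nB * \<epsilon>"
    using close[OF r] MG[OF sT] MG0 constants_nonneg by (intro mult_mono mult_right_mono) auto
  finally have n3: "norm (endo_app (gauge s) (endo_app B (X r - X s))) \<le> MG * nB * \<epsilon>" .
  show ?thesis
    using n1 n2 n3 abs_ge_zero[of "u r"]
      norm_triangle_ineq[of "endo_app (gauge t - gauge s) (endo_app B (X r))" "endo_app (gauge s) (endo_app B (X r - X s))"]
    by (intro order_trans[OF norm_triangle_ineq] add_mono) (auto intro: mult_left_mono order_trans)
qed

lemma norm_gauge_defect_increment_le:
  assumes s0: "0 \<le> s" and st: "s \<le> t" and tT: "t \<le> T" and eps: "\<epsilon> \<le> 1"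
    and MX: "\<And>r. r \<in> {0..T} \<Longrightarrow> norm (X r) \<le> MX"
    and MG: "\<And>r. r \<in> {0..T} \<Longrightarrow> norm (gauge r) \<le> MG"
    and close: "\<And>r. r \<in> {s..t} \<Longrightarrow> norm (gauge t - gauge r) \<le> \<epsilon> \<and> norm (X r - X s) \<le> \<epsilon>"
    and close_u1: "\<bar>u1 t - u1 s\<bar> \<le> \<epsilon>"
  shows "norm (gauge_defect t - gauge_defect s)
    \<le> \<epsilon> * (norm A * MX + nB * MX + MG * nB + MG * cr * MX) * ((t + U t) - (s + U s))"
proof -
  have sT: "s \<in> {0..T}" using s0 st tT by auto
  have e0: "0 \<le> \<epsilon>" using close[of s] st by (auto intro: order_trans[OF norm_ge_zero])
  have MX0: "0 \<le> MX" and MG0: "0 \<le> MG"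
    using MX[OF sT] MG[OF sT] by (auto intro: order_trans[OF norm_ge_zero])
  define \<rho> where "\<rho> = endo_app (gauge s) (endo_app (exp ((u1 t - u1 s) *\<^sub>R (- B)) - 1 - (u1 t - u1 s) *\<^sub>R (- B)) (X s))"
  define K1 where "K1 = \<epsilon> * norm A * MX"
  define K2 where "K2 = \<epsilon> * nB * MX + MG * nB * \<epsilon>"
  have b_int: "((\<lambda>r. K1 + \<bar>u r\<bar> * K2) has_integral (t - s) * K1 + (U t - U s) * K2) {s..t}"
    unfolding U_diff[OF s0 st tT]
  proof (rule has_integral_add)
    show "((\<lambda>r. K1) has_integral (t - s) * K1) {s..t}"
      using has_integral_const_real[of K1 s t] st by simp
    show "((\<lambda>r. \<bar>u r\<bar> * K2) has_integral integral {s..t} (\<lambda>r. \<bar>u r\<bar>) * K2) {s..t}"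
      using abs_u_integrable[of s t] s0 tT by (intro has_integral_mult_left integrable_integral) auto
  qed
  note f_int = gauge_defect_increment[OF s0 st tT, folded \<rho>_def]
  have bound1: "norm (gauge_defect t - gauge_defect s - \<rho>) \<le> (t - s) * K1 + (U t - U s) * K2"
    using integral_norm_bound_integral[OF has_integral_integrable[OF f_int] has_integral_integrable[OF b_int]
        norm_gauge_defect_integrand_le[OF _ s0 tT e0 MX MG close, folded K1_def K2_def]]
    by (simp add: integral_unique[OF f_int] integral_unique[OF b_int])
  have "norm (exp ((u1 t - u1 s) *\<^sub>R (- B)) - 1 - (u1 t - u1 s) *\<^sub>R (- B)) \<le> cr * \<bar>u1 t - u1 s\<bar>\<^sup>2"
    using norm_exp_scaleR_taylor_le[of "u1 t - u1 s" "- B"] close_u1 eps by (simp add: cr_def nB_def)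
  also have "\<dots> \<le> cr * (\<epsilon> * (U t - U s))"
    using mult_mono[OF close_u1 u1_diff_bound[OF s0 st tT] e0 abs_ge_zero] constants_nonneg
    by (intro mult_left_mono) (auto simp: power2_eq_square)
  finally have "norm \<rho> \<le> MG * (cr * (\<epsilon> * (U t - U s))) * MX"
    unfolding \<rho>_def using MG[OF sT] MX[OF sT] MG0 e0 constants_nonneg U_mono[OF s0 st tT]
    by (intro order_trans[OF norm_endo_app_endo_app_le] mult_mono) auto
  then have "norm (gauge_defect t - gauge_defect s) \<le> (t - s) * K1 + (U t - U s) * K2
      + MG * cr * MX * (\<epsilon> * (U t - U s))"
    using bound1 norm_triangle_sub[of "gauge_defect t - gauge_defect s" \<rho>] by (simp add: ac_simps)
  also have "\<dots> = \<epsilon> * (norm A * MX * (t - s) + (nB * MX + MG * nB + MG * cr * MX) * (U t - U s))"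
    by (simp add: K1_def K2_def algebra_simps)
  also have "\<dots> \<le> \<epsilon> * ((norm A * MX + nB * MX + MG * nB + MG * cr * MX) * (t - s)
      + (norm A * MX + nB * MX + MG * nB + MG * cr * MX) * (U t - U s))"
    using e0 MX0 MG0 constants_nonneg st U_mono[OF s0 st tT]
    by (intro mult_left_mono add_mono mult_right_mono) auto
  finally show ?thesis by (simp add: algebra_simps)
qed

lemma gauge_defect_eq_0:
  assumes t: "t \<in> {0..T}"
  shows "gauge_defect t = 0"
proof (rule eq_zero_if_increments_small[where G = "\<lambda>\<tau>. \<tau> + U \<tau>"])
  show "0 \<le> t" "gauge_defect 0 = 0" using t gauge_defect_0 by auto
  show "\<And>s \<tau>. 0 \<le> s \<Longrightarrow> s \<le> \<tau> \<Longrightarrow> \<tau> \<le> t \<Longrightarrow> s + U s \<le> \<tau> + U \<tau>"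
    using U_mono t by (auto intro: add_mono)
  fix e :: real assume e: "e > 0"
  obtain MX where MX: "\<And>r. r \<in> {0..T} \<Longrightarrow> norm (X r) \<le> MX"
    using continuous_on_interval_bounded[OF X_cont] by blast
  obtain MG where MG: "MG \<ge> 0" "\<And>r. r \<in> {0..T} \<Longrightarrow> norm (gauge r) \<le> MG"
    using continuous_on_interval_bounded[OF gauge_cont] by blast
  define Kc where "Kc = norm A * MX + nB * MX + MG * nB + MG * cr * MX"
  have "0 \<le> MX" using MX[of 0] Tpos by (auto intro: order_trans[OF norm_ge_zero])
  then have Kc0: "Kc \<ge> 0"
    using MG constants_nonneg unfolding Kc_def by (intro add_nonneg_nonneg mult_nonneg_nonneg) auto
  define \<epsilon> where "\<epsilon> = min 1 (e / (Kc + 1))"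
  have \<epsilon>: "\<epsilon> > 0" "\<epsilon> \<le> 1" "\<epsilon> * Kc \<le> e"
    using e Kc0 by (auto simp: \<epsilon>_def min_def field_simps intro: order_trans[OF mult_right_mono[of _ "e / (Kc + 1)"]])
  obtain dG where dG: "dG > 0" "\<And>x y. x \<in> {0..T} \<Longrightarrow> y \<in> {0..T} \<Longrightarrow> \<bar>y - x\<bar> < dG \<Longrightarrow> norm (gauge y - gauge x) < \<epsilon>"
    using continuous_on_interval_uniformly[OF gauge_cont \<epsilon>(1)] by blast
  obtain dX where dX: "dX > 0" "\<And>x y. x \<in> {0..T} \<Longrightarrow> y \<in> {0..T} \<Longrightarrow> \<bar>y - x\<bar> < dX \<Longrightarrow> norm (X y - X x) < \<epsilon>"
    using continuous_on_interval_uniformly[OF X_cont \<epsilon>(1)] by blast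
  obtain du where du: "du > 0" "\<And>x y. x \<in> {0..T} \<Longrightarrow> y \<in> {0..T} \<Longrightarrow> \<bar>y - x\<bar> < du \<Longrightarrow> norm (u1 y - u1 x) < \<epsilon>"
    using continuous_on_interval_uniformly[OF u1_cont \<epsilon>(1)] by blast
  show "\<exists>h>0. \<forall>s \<tau>. 0 \<le> s \<longrightarrow> s \<le> \<tau> \<longrightarrow> \<tau> \<le> t \<longrightarrow> \<tau> - s < h \<longrightarrow>
      norm (gauge_defect \<tau> - gauge_defect s) \<le> e * (\<tau> + U \<tau> - (s + U s))"
  proof (intro exI[of _ "min dG (min dX du)"] conjI allI impI)
    show "min dG (min dX du) > 0" using dG dX du by simp
    fix s \<tau> assume a: "0 \<le> s" "s \<le> \<tau>" "\<tau> \<le> t" "\<tau> - s < min dG (min dX du)"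
    have \<tau>T: "\<tau> \<le> T" using a(3) t by simp
    have "norm (gauge_defect \<tau> - gauge_defect s) \<le> \<epsilon> * Kc * (\<tau> + U \<tau> - (s + U s))"
      unfolding Kc_def
    proof (rule norm_gauge_defect_increment_le[OF a(1,2) \<tau>T \<epsilon>(2) MX MG(2)])
      fix r assume "r \<in> {s..\<tau>}"
      then show "norm (gauge \<tau> - gauge r) \<le> \<epsilon> \<and> norm (X r - X s) \<le> \<epsilon>"
        using dG(2)[of r \<tau>] dX(2)[of s r] a \<tau>T by auto
    next
      show "\<bar>u1 \<tau> - u1 s\<bar> \<le> \<epsilon>" using du(2)[of s \<tau>] a \<tau>T by auto
    qed
    also have "\<dots> \<le> e * (\<tau> + U \<tau> - (s + U s))"
      using \<epsilon>(3) U_mono[OF a(1,2) \<tau>T] a(2) by (intro mult_right_mono) auto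
    finally show "norm (gauge_defect \<tau> - gauge_defect s) \<le> e * (\<tau> + U \<tau> - (s + U s))" .
  qed
qed

definition gauge_inv where "gauge_inv t = exp (u1 t *\<^sub>R B)" for t

lemma gauge_inv_gauge: "gauge_inv t * gauge t = 1"
  unfolding gauge_inv_def gauge_def using exp_minus_inverse[of "u1 t *\<^sub>R B"] by simp

lemma X_W: "X t = endo_app (gauge_inv t) (W t)"
  unfolding W_def endo_app_mult[symmetric] gauge_inv_gauge by simp

lemma W_eq_integral:
  "t \<in> {0..T} \<Longrightarrow> W t = x0 + integral {0..t} (\<lambda>r. endo_app (gauge r) (endo_app A (X r)))"
  using gauge_defect_eq_0[of t] by (simp add: gauge_defect_def algebra_simps)

lemma W_deriv:
  assumes "t \<in> {0..T}"
  shows "(W has_vector_derivative endo_app (gauge t) (endo_app A (X t))) (at t within {0..T})"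
proof -
  have "((\<lambda>\<tau>. x0 + integral {0..\<tau>} (\<lambda>r. endo_app (gauge r) (endo_app A (X r)))) has_vector_derivative endo_app (gauge t) (endo_app A (X t))) (at t within {0..T})"
    using integral_has_vector_derivative[OF gauge_A_X_cont assms] by (auto intro!: derivative_eq_intros)
  then show ?thesis
    by (rule has_vector_derivative_transform[OF assms, rotated]) (simp add: W_eq_integral)
qed

lemma W_0: "W 0 = x0" by (simp add: W_def gauge_0 X_0)

lemma gauge_A_X_eq: "endo_app (gauge t) (endo_app A (X t)) = endo_app (conj_exp B A (u1 t)) (W t)"
proof -
  have "endo_app (conj_exp B A (u1 t)) (W t) = endo_app (gauge t * A * gauge_inv t) (W t)"
    by (simp add: conj_exp_def gauge_def gauge_inv_def)
  also have "\<dots> = endo_app (gauge t) (endo_app A (X t))" by (simp add: endo_app_mult X_W)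
  finally show ?thesis by simp
qed

lemma W_norm: "t \<in> {0..T} \<Longrightarrow> norm (W t) = 1"
proof -
  assume t: "t \<in> {0..T}"
  have d: "((\<lambda>\<tau>. W \<tau> \<bullet> W \<tau>) has_vector_derivative 0) (at \<tau> within {0..T})" if "\<tau> \<in> {0..T}" for \<tau>
  proof -
    have "((\<lambda>\<tau>. W \<tau> \<bullet> W \<tau>) has_vector_derivative
       (W \<tau> \<bullet> endo_app (gauge \<tau>) (endo_app A (X \<tau>)) + endo_app (gauge \<tau>) (endo_app A (X \<tau>)) \<bullet> W \<tau>)) (at \<tau> within {0..T})"
      by (rule bounded_bilinear.has_vector_derivative[OF bounded_bilinear_inner W_deriv[OF that] W_deriv[OF that]])
    moreover have "endo_app (gauge \<tau>) (endo_app A (X \<tau>)) \<bullet> W \<tau> = 0"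
    proof -
      have sk: "skew (- B)" by (rule skew_minus[OF skew_B])
      have "endo_app (gauge \<tau>) (endo_app A (X \<tau>)) \<bullet> W \<tau>
          = endo_app A (X \<tau>) \<bullet> endo_app (exp ((- u1 \<tau>) *\<^sub>R (- B))) (W \<tau>)"
        unfolding gauge_def by (rule skew_exp_adj[OF sk])
      also have "\<dots> = endo_app A (X \<tau>) \<bullet> X \<tau>" by (simp add: X_W gauge_inv_def)
      also have "\<dots> = 0" by (rule skew_self[OF skew_A])
      finally show ?thesis .
    qed
    ultimately show ?thesis by (simp add: inner_commute)
  qed
  obtain c where "\<And>x. x \<in> {0..T} \<Longrightarrow> W x \<bullet> W x = c"
    using has_vector_derivative_zero_constant[of "{0..T}" "\<lambda>\<tau>. W \<tau> \<bullet> W \<tau>"] d by auto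
  then have "W t \<bullet> W t = W 0 \<bullet> W 0" using t Tpos
    by (metis atLeastAtMost_iff less_eq_real_def order_refl)
  then show ?thesis using norm_cvec_phi W_0 by (simp add: x0_def norm_eq_sqrt_inner)
qed

definition Y where "Y t = endo_app (exp (t *\<^sub>R (- A))) (W t)" for t

definition Y_rate where "Y_rate r = endo_app (exp (r *\<^sub>R (- A))) (endo_app (pert (u1 r)) (W r))" for r

lemma Y_deriv:
  assumes "t \<in> {0..T}"
  shows "(Y has_vector_derivative Y_rate t) (at t within {0..T})"
proof -
  have "(Y has_vector_derivative (endo_app (exp (t *\<^sub>R (- A))) (endo_app (gauge t) (endo_app A (X t)))
      + endo_app (exp (t *\<^sub>R (- A)) * (- A)) (W t))) (at t within {0..T})"
    unfolding Y_def by (rule endo_app.has_vector_derivative[OF exp_scaleR_has_vector_derivative_right W_deriv[OF assms]])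
  moreover have "endo_app (exp (t *\<^sub>R (- A))) (endo_app (gauge t) (endo_app A (X t)))
      + endo_app (exp (t *\<^sub>R (- A)) * (- A)) (W t) = Y_rate t"
    by (simp add: Y_rate_def gauge_A_X_eq pert_def endo_app_mult endo_app_diff_left endo_app_minus_left
        endo_app.diff_right endo_app.minus_right)
  ultimately show ?thesis by simp
qed

lemma Y_0: "Y 0 = x0" by (simp add: Y_def W_0)

lemma Y_rate_has_integral:
  assumes "t \<in> {0..T}"
  shows "(Y_rate has_integral (Y t - x0)) {0..t}"
  unfolding Y_0[symmetric]
proof (rule fundamental_theorem_of_calculus)
  show "0 \<le> t" using assms by simp
  fix r assume "r \<in> {0..t}"
  then show "(Y has_vector_derivative Y_rate r) (at r within {0..t})"
    using assms by (intro has_vector_derivative_within_subset[OF Y_deriv]) auto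
qed

lemma W_Y: "W t = endo_app (exp (t *\<^sub>R A)) (Y t)"
proof -
  have "exp (t *\<^sub>R A) * exp (t *\<^sub>R (- A)) = 1"
    using exp_minus_inverse[of "t *\<^sub>R A"] by simp
  then show ?thesis by (simp add: Y_def endo_app_mult[symmetric])
qed

end

section \<open>Estimates for controls with small primitive\<close>

locale small_trajectory = trajectory H0 H1 \<phi> lam i1 K T u X
  for H0 H1 :: "real^'n^'n" and \<phi> lam i1 K T u X +
  fixes \<eta> :: real
  assumes eta1: "\<eta> \<le> 1"
    and u1_small: "\<forall>t\<in>{0..T}. \<bar>integral {0..t} u\<bar> \<le> \<eta>"
begin

lemma abs_u1_le: "t \<in> {0..T} \<Longrightarrow> \<bar>u1 t\<bar> \<le> \<eta>"
  using u1_small by (simp add: u1_def)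

lemma abs_u1_le_1: "t \<in> {0..T} \<Longrightarrow> \<bar>u1 t\<bar> \<le> 1"
  using abs_u1_le eta1 by force

definition u1_L1 where "u1_L1 = integral {0..T} (\<lambda>r. \<bar>u1 r\<bar>)"
definition u1_L2sq where "u1_L2sq = integral {0..T} (\<lambda>r. (u1 r)\<^sup>2)"

lemma abs_u1_cont: "continuous_on {0..T} (\<lambda>r. \<bar>u1 r\<bar>)"
  by (intro continuous_intros u1_cont)

lemma abs_u1_integrable: "{a..b} \<subseteq> {0..T} \<Longrightarrow> (\<lambda>r. \<bar>u1 r\<bar>) integrable_on {a..b}"
  by (rule integrable_continuous_interval) (use abs_u1_cont continuous_on_subset in blast)

lemma u1_sq_integrable: "(\<lambda>r. (u1 r)\<^sup>2) integrable_on {0..T}"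
  by (rule integrable_continuous_interval) (intro continuous_intros u1_cont)

lemma u1_L1_nonneg: "0 \<le> u1_L1"
  unfolding u1_L1_def by (rule integral_nonneg[OF abs_u1_integrable]) auto

lemma u1_L2sq_nonneg: "0 \<le> u1_L2sq"
  unfolding u1_L2sq_def by (rule integral_nonneg[OF u1_sq_integrable]) auto

lemma Y_dist_x0: "t \<in> {0..T} \<Longrightarrow> norm (Y t - x0) \<le> k1 * u1_L1"
proof -
  assume t: "t \<in> {0..T}"
  have sk: "skew (- A)" by (rule skew_minus[OF skew_A])
  have "norm (Y t - x0) = norm (integral {0..t} Y_rate)"
    using Y_rate_has_integral[OF t] by (simp add: integral_unique)
  also have "\<dots> \<le> integral {0..t} (\<lambda>r. k1 * \<bar>u1 r\<bar>)"
  proof (rule integral_norm_bound_integral[OF has_integral_integrable[OF Y_rate_has_integral[OF t]]])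
    show "(\<lambda>r. k1 * \<bar>u1 r\<bar>) integrable_on {0..t}" using abs_u1_integrable[of 0 t] t
      by (auto intro: integrable_on_mult_right)
    fix r assume r: "r \<in> {0..t}"
    then have rT: "r \<in> {0..T}" using t by auto
    have "norm (Y_rate r) = norm (endo_app (pert (u1 r)) (W r))"
      unfolding Y_rate_def by (rule skew_exp_norm[OF sk])
    also have "\<dots> \<le> norm (pert (u1 r)) * norm (W r)" by (rule endo_app_norm)
    also have "\<dots> \<le> k1 * \<bar>u1 r\<bar>" using norm_pert_le[OF abs_u1_le_1[OF rT]] W_norm[OF rT] by simp
    finally show "norm (Y_rate r) \<le> k1 * \<bar>u1 r\<bar>" .
  qed
  also have "\<dots> \<le> integral {0..T} (\<lambda>r. k1 * \<bar>u1 r\<bar>)"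
    by (rule integral_subset_le) (use t abs_u1_integrable[of 0 t] abs_u1_integrable[of 0 T] constants_nonneg in \<open>auto intro: integrable_on_mult_right\<close>)
  also have "\<dots> = k1 * u1_L1" by (simp add: u1_L1_def)
  finally show ?thesis .
qed

definition X1 where "X1 t = cis (- lam i1 * t) *s x0" for t

lemma X1_exp: "X1 t = endo_app (exp (t *\<^sub>R A)) x0"
  using exp_A_phi[of t 1 i1] by (simp add: X1_def x0_def)

lemma W_dist_X1: "t \<in> {0..T} \<Longrightarrow> norm (W t - X1 t) \<le> k1 * u1_L1"
proof -
  assume t: "t \<in> {0..T}"
  have "W t - X1 t = endo_app (exp (t *\<^sub>R A)) (Y t - x0)"
    by (simp add: W_Y X1_exp endo_app.diff_right)
  then have "norm (W t - X1 t) = norm (Y t - x0)" by (simp add: skew_exp_norm[OF skew_A])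
  then show ?thesis using Y_dist_x0[OF t] by simp
qed

lemma u1_L1_sq_le: "u1_L1\<^sup>2 \<le> T * u1_L2sq"
  using integral_abs_sq_le[OF u1_cont Tpos] by (simp add: u1_L1_def u1_L2sq_def)

definition target where "target = \<i> *s (cis (- lam i1 * T) *s cvec (\<phi> K))"
definition dev where "dev = norm (X T - X1 T)"

lemma norm_target: "norm target = 1"
  by (simp add: target_def norm_vector_scalar_mult norm_mult norm_cvec_phi)

lemma target_eq: "target = (\<i> * cis (- lam i1 * T)) *s cvec (\<phi> K)"
  by (simp add: target_def vector_smult_assoc)

lemma B_x0_orth_phi_K: "endo_app B (a *s x0) \<bullet> (b *s cvec (\<phi> K)) = 0"
  by (simp add: inner_eq_Re_herm B_app_scalar herm_scale_left herm_scale_right x0_def herm_B_phi_K)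

lemma C1_x0_orth_phi_K: "endo_app C1 (a *s x0) \<bullet> (b *s cvec (\<phi> K)) = 0"
  by (simp add: inner_eq_Re_herm C1_app_scalar herm_scale_left herm_scale_right x0_def herm_C1_phi_K)

lemma C2_x0_inner_phi_K: "endo_app C2 (a *s x0) \<bullet> (b *s cvec (\<phi> K)) = Re (a * cnj b * (- \<i> * complex_of_real aK))"
  by (simp add: inner_eq_Re_herm C2_app_scalar herm_scale_left herm_scale_right x0_def herm_C2_phi_K mult_ac)

lemma norm_B_X1: "norm (endo_app B (X1 t)) = beta"
  by (simp add: X1_def B_app_scalar B_app x0_def cmat_scale cmat_cvec norm_vector_scalar_mult norm_mult norm_cvec beta_def)

lemma X_T_decomp: "X T - X1 T = (W T - X1 T) + u1 T *\<^sub>R endo_app B (X1 T) + u1 T *\<^sub>R endo_app B (W T - X1 T)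
    + endo_app (gauge_inv T - 1 - u1 T *\<^sub>R B) (W T)"
  by (simp add: X_W endo_app_diff_left endo_app_add_left endo_app_scaleR_left endo_app.diff_right endo_app.scaleR_right algebra_simps)

lemma norm_gauge_inv_T_taylor_le: "norm (gauge_inv T - 1 - u1 T *\<^sub>R B) \<le> cr * (u1 T)\<^sup>2"
  using norm_exp_scaleR_taylor_le[of "u1 T" B] abs_u1_le_1[of T] Tpos by (simp add: gauge_inv_def cr_def nB_def)

lemma abs_u1_T_bound:
  assumes small_eta: "cr * \<eta> \<le> beta / 2"
  shows "\<bar>u1 T\<bar> * (beta / 2) \<le> dev + Ldev * u1_L1"
proof -
  have eq: "u1 T *\<^sub>R endo_app B (X1 T) = (X T - X1 T) - (W T - X1 T) - u1 T *\<^sub>R endo_app B (W T - X1 T)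
      - endo_app (gauge_inv T - 1 - u1 T *\<^sub>R B) (W T)"
    using X_T_decomp by (simp add: algebra_simps)
  have "\<bar>u1 T\<bar> * beta = norm (u1 T *\<^sub>R endo_app B (X1 T))" by (simp add: norm_B_X1)
  also have "\<dots> \<le> dev + k1 * u1_L1 + \<bar>u1 T\<bar> * (nB * (k1 * u1_L1)) + cr * (u1 T)\<^sup>2"
  proof -
    have n3: "norm (u1 T *\<^sub>R endo_app B (W T - X1 T)) \<le> \<bar>u1 T\<bar> * (nB * (k1 * u1_L1))"
    proof -
      have "norm (endo_app B (W T - X1 T)) \<le> nB * norm (W T - X1 T)" using endo_app_norm by (simp add: nB_def)
      also have "\<dots> \<le> nB * (k1 * u1_L1)" using W_dist_X1[of T] Tpos constants_nonneg
        by (simp add: mult_left_mono)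
      finally show ?thesis by (simp add: mult_left_mono)
    qed
    have n4: "norm (endo_app (gauge_inv T - 1 - u1 T *\<^sub>R B) (W T)) \<le> cr * (u1 T)\<^sup>2"
      using endo_app_norm[of "gauge_inv T - 1 - u1 T *\<^sub>R B" "W T"] norm_gauge_inv_T_taylor_le W_norm[of T] Tpos
        by simp
    show ?thesis unfolding eq dev_def
      using W_dist_X1[of T] Tpos n3 n4
        norm_triangle_ineq4[of "X T - X1 T - (W T - X1 T)" "u1 T *\<^sub>R endo_app B (W T - X1 T)"]
        norm_triangle_ineq4[of "X T - X1 T - (W T - X1 T) - u1 T *\<^sub>R endo_app B (W T - X1 T)"
          "endo_app (gauge_inv T - 1 - u1 T *\<^sub>R B) (W T)"]
        norm_triangle_ineq4[of "X T - X1 T" "W T - X1 T"]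
      by force
  qed
  finally have a: "\<bar>u1 T\<bar> * beta \<le> dev + k1 * u1_L1 + \<bar>u1 T\<bar> * (nB * (k1 * u1_L1)) + cr * (u1 T)\<^sup>2" .
  have b: "\<bar>u1 T\<bar> * (nB * (k1 * u1_L1)) \<le> nB * (k1 * u1_L1)"
    using abs_u1_le_1[of T] Tpos constants_nonneg u1_L1_nonneg by (simp add: mult_left_le_one_le)
  have c: "cr * (u1 T)\<^sup>2 \<le> \<bar>u1 T\<bar> * (beta / 2)"
  proof -
    have "cr * (u1 T)\<^sup>2 = (cr * \<bar>u1 T\<bar>) * \<bar>u1 T\<bar>" by (simp add: power2_eq_square)
    also have "\<dots> \<le> (cr * \<eta>) * \<bar>u1 T\<bar>" using abs_u1_le[of T] Tpos constants_nonneg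
      by (intro mult_right_mono mult_left_mono) auto
    also have "\<dots> \<le> (beta / 2) * \<bar>u1 T\<bar>" using small_eta by (intro mult_right_mono) auto
    finally show ?thesis by (simp add: mult.commute)
  qed
  show ?thesis using a b c by (simp add: Ldev_def algebra_simps)
qed

definition cK where "cK = \<i> * cis (- lam i1 * T) * cis (- lam K * (- T))"
definition target0 where "target0 = endo_app (exp ((- T) *\<^sub>R A)) target"
definition target_at where "target_at r = (cK * cis (- lam K * r)) *s cvec (\<phi> K)" for r
definition theta where "theta r = (lam K - lam i1) * (r - T)" for r

lemma target0_eq: "target0 = cK *s cvec (\<phi> K)"
  unfolding target0_def target_eq exp_A_phi cK_def by simp

lemma W_T_inner_target: "W T \<bullet> target = Y T \<bullet> target0"
  by (simp add: W_Y skew_exp_adj[OF skew_A] target0_def)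

lemma x0_orth_target0: "x0 \<bullet> target0 = 0"
proof (cases "K = i1")
  case True
  have "cK = \<i>" unfolding cK_def using True by (simp add: mult.assoc cis_mult)
  moreover have "\<phi> i1 \<bullet> \<phi> K = 1" using orth True by simp
  moreover have "x0 \<bullet> target0 = Re (cnj cK * complex_of_real (\<phi> i1 \<bullet> \<phi> K))"
    by (simp add: inner_eq_Re_herm target0_eq herm_scale_right x0_def herm_cvec)
  ultimately show ?thesis by simp
next
  case False
  then have "\<phi> i1 \<bullet> \<phi> K = 0" using orth by metis
  then show ?thesis by (simp add: inner_eq_Re_herm target0_eq herm_scale_right x0_def herm_cvec)
qed

lemma Y_rate_integrable: "Y_rate integrable_on {0..T}"
  using Y_rate_has_integral[of T] Tpos by (auto simp: integrable_on_def)

lemma Y_rate_inner_integrable: "(\<lambda>r. Y_rate r \<bullet> target0) integrable_on {0..T}"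
  using integrable_linear[OF Y_rate_integrable bounded_linear_inner_left[of target0]] by (simp add: o_def)

lemma Y_T_inner_target0: "Y T \<bullet> target0 = integral {0..T} (\<lambda>r. Y_rate r \<bullet> target0)"
proof -
  have "Y T \<bullet> target0 = x0 \<bullet> target0 + integral {0..T} Y_rate \<bullet> target0"
    using Y_rate_has_integral[of T] Tpos by (simp add: integral_unique inner_diff_left)
  also have "integral {0..T} Y_rate \<bullet> target0 = integral {0..T} (\<lambda>r. Y_rate r \<bullet> target0)"
    using integral_linear[OF Y_rate_integrable bounded_linear_inner_left[of target0]] by (simp add: o_def)
  finally show ?thesis by (simp add: x0_orth_target0)
qed

lemma Y_rate_inner_target0: "Y_rate r \<bullet> target0 = endo_app (pert (u1 r)) (W r) \<bullet> target_at r"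
proof -
  have sk: "skew (- A)" by (rule skew_minus[OF skew_A])
  have "Y_rate r \<bullet> target0 = endo_app (pert (u1 r)) (W r) \<bullet> endo_app (exp ((- r) *\<^sub>R (- A))) target0"
    unfolding Y_rate_def by (rule skew_exp_adj[OF sk])
  also have "endo_app (exp ((- r) *\<^sub>R (- A))) target0 = target_at r"
    using exp_A_phi[of r cK K] by (simp add: target0_eq target_at_def)
  finally show ?thesis .
qed

lemma C2_X1_inner_target_at: "endo_app C2 (X1 r) \<bullet> target_at r = - aK * cos (theta r)"
proof -
  have "cis (- lam i1 * r) * cnj (cK * cis (- lam K * r)) = - \<i> * cis (theta r)"
    unfolding cK_def using cis_mult_cnj[of "- lam i1 * r" "- lam i1 * T" "- lam K * (- T)" "- lam K * r"]
    by (simp add: theta_def algebra_simps)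
  then have h: "cis (- lam i1 * r) * cnj (cK * cis (- lam K * r)) * (- \<i> * complex_of_real aK) =
      - complex_of_real aK * cis (theta r)"
    by (simp add: algebra_simps)
  show ?thesis
    unfolding X1_def target_at_def C2_x0_inner_phi_K h by simp
qed

lemma C1_X1_inner_target_at: "endo_app C1 (X1 r) \<bullet> target_at r = 0"
  by (simp add: X1_def target_at_def C1_x0_orth_phi_K)

lemma norm_X1: "norm (X1 r) = 1"
  by (simp add: X1_def norm_vector_scalar_mult x0_def norm_cvec_phi)

lemma norm_target_at: "norm (target_at r) = 1"
proof -
  have "norm cK = 1" by (simp add: cK_def norm_mult)
  then show ?thesis by (simp add: target_at_def norm_vector_scalar_mult norm_mult norm_cvec_phi)
qed

text \<open>Along the free solution \<open>X1\<close> the commutator \<open>C1\<close> contributes nothing in the direction of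
  \<open>\<phi> K\<close>, and \<open>C2\<close> contributes exactly \<open>-aK/2 u1\<^sup>2 cos \<theta>\<close>; \<open>quad_rem\<close> is what is left.\<close>

definition quad_rem where "quad_rem r = Y_rate r \<bullet> target0 + (aK / 2) * (u1 r)\<^sup>2 * cos (theta r)" for r

lemma quad_rem_bound: "r \<in> {0..T} \<Longrightarrow> \<bar>quad_rem r\<bar> \<le> k3 * \<eta> * (u1 r)\<^sup>2 + k1 * k1 * u1_L1 * \<bar>u1 r\<bar>"
proof -
  assume r: "r \<in> {0..T}"
  define z where "z = u1 r"
  have z1: "\<bar>z\<bar> \<le> 1" using abs_u1_le_1[OF r] by (simp add: z_def)
  define R where "R = pert z - z *\<^sub>R C1 - (z\<^sup>2 / 2) *\<^sub>R C2"
  have dec: "endo_app (pert z) (W r) = z *\<^sub>R endo_app C1 (X1 r) + (z\<^sup>2 / 2) *\<^sub>R endo_app C2 (X1 r)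
      + endo_app R (X1 r) + endo_app (pert z) (W r - X1 r)"
    by (simp add: R_def endo_app_diff_left endo_app_add_left endo_app_scaleR_left endo_app.diff_right algebra_simps)
  have "quad_rem r = endo_app R (X1 r) \<bullet> target_at r + endo_app (pert z) (W r - X1 r) \<bullet> target_at r"
    unfolding quad_rem_def Y_rate_inner_target0 z_def[symmetric] dec
    by (simp add: inner_add_left C1_X1_inner_target_at C2_X1_inner_target_at algebra_simps)
  moreover have "\<bar>endo_app R (X1 r) \<bullet> target_at r\<bar> \<le> k3 * \<eta> * (u1 r)\<^sup>2"
  proof -
    have "\<bar>endo_app R (X1 r) \<bullet> target_at r\<bar> \<le> norm (endo_app R (X1 r)) * norm (target_at r)"
      by (rule Cauchy_Schwarz_ineq2)
    also have "\<dots> \<le> norm R" using endo_app_norm[of R "X1 r"] by (simp add: norm_X1 norm_target_at)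
    also have "\<dots> \<le> k3 * \<bar>z\<bar> ^ 3" using norm_pert_taylor_le[OF z1] by (simp add: R_def)
    also have "\<dots> = k3 * \<bar>z\<bar> * (u1 r)\<^sup>2"
      by (simp add: z_def power2_eq_square power3_eq_cube abs_mult_self_eq)
    also have "\<dots> \<le> k3 * \<eta> * (u1 r)\<^sup>2"
      using abs_u1_le[OF r] constants_nonneg by (intro mult_right_mono mult_left_mono) (auto simp: z_def)
    finally show ?thesis .
  qed
  moreover have "\<bar>endo_app (pert z) (W r - X1 r) \<bullet> target_at r\<bar> \<le> k1 * k1 * u1_L1 * \<bar>u1 r\<bar>"
  proof -
    have "\<bar>endo_app (pert z) (W r - X1 r) \<bullet> target_at r\<bar>
        \<le> norm (endo_app (pert z) (W r - X1 r)) * norm (target_at r)" by (rule Cauchy_Schwarz_ineq2)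
    also have "\<dots> \<le> norm (pert z) * norm (W r - X1 r)" using endo_app_norm by (simp add: norm_target_at)
    also have "\<dots> \<le> (k1 * \<bar>z\<bar>) * (k1 * u1_L1)"
      using norm_pert_le[OF z1] W_dist_X1[OF r] constants_nonneg by (intro mult_mono) auto
    finally show ?thesis by (simp add: z_def mult_ac)
  qed
  ultimately show ?thesis by linarith
qed

lemma theta_cont: "continuous_on {0..T} theta"
  unfolding theta_def[abs_def] by (intro continuous_intros)

lemma u1_sq_cos_integrable: "(\<lambda>r. (u1 r)\<^sup>2 * cos (theta r)) integrable_on {0..T}"
  by (rule integrable_continuous_interval) (intro continuous_intros u1_cont theta_cont)

lemma quad_rem_integrable: "quad_rem integrable_on {0..T}"
  unfolding quad_rem_def[abs_def]
  by (intro integrable_add Y_rate_inner_integrable) (use integrable_on_mult_right[OF u1_sq_cos_integrable, of "aK / 2"] in \<open>simp add: mult.assoc\<close>)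

lemma integral_Y_rate_split: "integral {0..T} (\<lambda>r. Y_rate r \<bullet> target0) = integral {0..T} quad_rem
    - (aK / 2) * integral {0..T} (\<lambda>r. (u1 r)\<^sup>2 * cos (theta r))"
proof -
  have "integral {0..T} (\<lambda>r. Y_rate r \<bullet> target0)
      = integral {0..T} (\<lambda>r. quad_rem r - (aK / 2) * ((u1 r)\<^sup>2 * cos (theta r)))"
    by (rule integral_cong) (simp add: quad_rem_def)
  also have "\<dots> = integral {0..T} quad_rem - integral {0..T} (\<lambda>r. (aK / 2) * ((u1 r)\<^sup>2 * cos (theta r)))"
    by (rule integral_diff[OF quad_rem_integrable integrable_on_mult_right[OF u1_sq_cos_integrable]])
  finally show ?thesis by simp
qed

lemma integral_u1_sq_cos_ge: "(1 - gap * T) * u1_L2sq \<le> integral {0..T} (\<lambda>r. (u1 r)\<^sup>2 * cos (theta r))"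
proof -
  have "(1 - gap * T) * u1_L2sq = integral {0..T} (\<lambda>r. (1 - gap * T) * (u1 r)\<^sup>2)"
    by (simp add: u1_L2sq_def)
  also have "\<dots> \<le> integral {0..T} (\<lambda>r. (u1 r)\<^sup>2 * cos (theta r))"
  proof (rule integral_le[OF integrable_on_mult_right[OF u1_sq_integrable] u1_sq_cos_integrable])
    fix r assume r: "r \<in> {0..T}"
    have "\<bar>theta r\<bar> \<le> gap * T"
    proof -
      have "\<bar>theta r\<bar> = gap * \<bar>r - T\<bar>" by (simp add: theta_def gap_def abs_mult)
      also have "\<dots> \<le> gap * T" using r constants_nonneg by (intro mult_left_mono) auto
      finally show ?thesis .
    qed
    then have "1 - gap * T \<le> cos (theta r)" using cos_ge_1_minus_abs[of "theta r"] by linarith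
    then show "(1 - gap * T) * (u1 r)\<^sup>2 \<le> (u1 r)\<^sup>2 * cos (theta r)"
      by (simp add: mult.commute mult_left_mono)
  qed
  finally show ?thesis .
qed

lemma integral_quad_rem_bound: "\<bar>integral {0..T} quad_rem\<bar> \<le> k3 * \<eta> * u1_L2sq + k1 * k1 * u1_L1 * u1_L1"
proof -
  have "norm (integral {0..T} quad_rem) \<le> integral {0..T} (\<lambda>r. k3 * \<eta> * (u1 r)\<^sup>2 + k1 * k1 * u1_L1 * \<bar>u1 r\<bar>)"
  proof (rule integral_norm_bound_integral[OF quad_rem_integrable])
    show "(\<lambda>r. k3 * \<eta> * (u1 r)\<^sup>2 + k1 * k1 * u1_L1 * \<bar>u1 r\<bar>) integrable_on {0..T}"
      by (intro integrable_add integrable_on_mult_right u1_sq_integrable abs_u1_integrable) auto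
    fix r assume "r \<in> {0..T}"
    then show "norm (quad_rem r) \<le> k3 * \<eta> * (u1 r)\<^sup>2 + k1 * k1 * u1_L1 * \<bar>u1 r\<bar>"
      using quad_rem_bound by simp
  qed
  also have "\<dots> = k3 * \<eta> * u1_L2sq + k1 * k1 * u1_L1 * u1_L1"
  proof -
    have "integral {0..T} (\<lambda>r. k3 * \<eta> * (u1 r)\<^sup>2 + k1 * k1 * u1_L1 * \<bar>u1 r\<bar>)
       = integral {0..T} (\<lambda>r. k3 * \<eta> * (u1 r)\<^sup>2) + integral {0..T} (\<lambda>r. k1 * k1 * u1_L1 * \<bar>u1 r\<bar>)"
      by (rule integral_add) (auto intro: integrable_on_mult_right u1_sq_integrable abs_u1_integrable)
    then show ?thesis by (simp add: u1_L2sq_def u1_L1_def)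
  qed
  finally show ?thesis by simp
qed

lemma Im_herm_X_T: "Im (herm (X T) (cis (- lam i1 * T) *s cvec (\<phi> K))) = W T \<bullet> target
    + endo_app (gauge_inv T - 1) (W T) \<bullet> target"
proof -
  have e1: "Im (herm (X T) (cis (- lam i1 * T) *s cvec (\<phi> K))) = X T \<bullet> target"
    by (simp add: Im_herm target_def)
  have e2: "X T = W T + endo_app (gauge_inv T - 1) (W T)" by (simp add: X_W endo_app_diff_left)
  show ?thesis unfolding e1 by (subst e2) (simp add: inner_add_left)
qed

lemma gauge_correction_bound: "\<bar>endo_app (gauge_inv T - 1) (W T) \<bullet> target\<bar> \<le> \<bar>u1 T\<bar> * (nB * (k1 * u1_L1))
    + cr * (u1 T)\<^sup>2"
proof -
  have dec: "endo_app (gauge_inv T - 1) (W T) = u1 T *\<^sub>R endo_app B (X1 T)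
      + (u1 T *\<^sub>R endo_app B (W T - X1 T) + endo_app (gauge_inv T - 1 - u1 T *\<^sub>R B) (W T))"
    by (simp add: endo_app_diff_left endo_app_add_left endo_app_scaleR_left endo_app.diff_right algebra_simps)
  have p: "endo_app B (X1 T) \<bullet> target = 0" unfolding X1_def target_eq by (rule B_x0_orth_phi_K)
  have "\<bar>endo_app (gauge_inv T - 1) (W T) \<bullet> target\<bar>
      = \<bar>(u1 T *\<^sub>R endo_app B (W T - X1 T) + endo_app (gauge_inv T - 1 - u1 T *\<^sub>R B) (W T)) \<bullet> target\<bar>"
    unfolding dec by (simp add: inner_add_left p)
  also have "\<dots> \<le> norm (u1 T *\<^sub>R endo_app B (W T - X1 T) + endo_app (gauge_inv T - 1 - u1 T *\<^sub>R B) (W T)) * norm target"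
    by (rule Cauchy_Schwarz_ineq2)
  also have "\<dots> \<le> norm (u1 T *\<^sub>R endo_app B (W T - X1 T)) + norm (endo_app (gauge_inv T - 1 - u1 T *\<^sub>R B) (W T))"
    using norm_triangle_ineq[of "u1 T *\<^sub>R endo_app B (W T - X1 T)" "endo_app (gauge_inv T - 1 - u1 T *\<^sub>R B) (W T)"]
    by (simp only: norm_target mult_1_right)
  also have "\<dots> \<le> \<bar>u1 T\<bar> * (nB * (k1 * u1_L1)) + cr * (u1 T)\<^sup>2"
  proof (rule add_mono)
    have "norm (endo_app B (W T - X1 T)) \<le> nB * norm (W T - X1 T)" using endo_app_norm by (simp add: nB_def)
    also have "\<dots> \<le> nB * (k1 * u1_L1)" using W_dist_X1[of T] Tpos constants_nonneg
      by (simp add: mult_left_mono)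
    finally show "norm (u1 T *\<^sub>R endo_app B (W T - X1 T)) \<le> \<bar>u1 T\<bar> * (nB * (k1 * u1_L1))"
      by (simp add: mult_left_mono)
    show "norm (endo_app (gauge_inv T - 1 - u1 T *\<^sub>R B) (W T)) \<le> cr * (u1 T)\<^sup>2"
      using endo_app_norm[of "gauge_inv T - 1 - u1 T *\<^sub>R B" "W T"] norm_gauge_inv_T_taylor_le W_norm[of T] Tpos
        by simp
  qed
  finally show ?thesis .
qed

lemma endpoint_lower_bound_raw:
  "- sgn aK * Im (herm (X T) (cis (- lam i1 * T) *s cvec (\<phi> K)))
     \<ge> (\<bar>aK\<bar> / 2) * (1 - gap * T) * u1_L2sq - (k3 * \<eta> * u1_L2sq + k1 * k1 * u1_L1 * u1_L1)
       - (\<bar>u1 T\<bar> * (nB * (k1 * u1_L1)) + cr * (u1 T)\<^sup>2)"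
proof -
  define J where "J = integral {0..T} (\<lambda>r. (u1 r)\<^sup>2 * cos (theta r))"
  define Ie where "Ie = integral {0..T} quad_rem"
  define q2 where "q2 = endo_app (gauge_inv T - 1) (W T) \<bullet> target"
  have Q: "Im (herm (X T) (cis (- lam i1 * T) *s cvec (\<phi> K))) = Ie - (aK / 2) * J + q2"
    unfolding Im_herm_X_T W_T_inner_target Y_T_inner_target0 integral_Y_rate_split by (simp add: J_def Ie_def q2_def)
  have s: "sgn aK * aK = \<bar>aK\<bar>" by (simp add: sgn_mult_self_eq abs_if sgn_if)
  have sb: "\<bar>sgn aK\<bar> \<le> 1" by (simp add: sgn_if)
  have "- sgn aK * (Ie - (aK / 2) * J + q2) = (\<bar>aK\<bar> / 2) * J - sgn aK * (Ie + q2)"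
    using s by (simp add: algebra_simps)
  also have "\<dots> \<ge> (\<bar>aK\<bar> / 2) * (1 - gap * T) * u1_L2sq - (\<bar>Ie\<bar> + \<bar>q2\<bar>)"
  proof -
    have "(\<bar>aK\<bar> / 2) * ((1 - gap * T) * u1_L2sq) \<le> (\<bar>aK\<bar> / 2) * J"
      using integral_u1_sq_cos_ge by (intro mult_left_mono) (auto simp: J_def)
    moreover have "sgn aK * (Ie + q2) \<le> \<bar>Ie\<bar> + \<bar>q2\<bar>"
    proof -
      have "sgn aK * (Ie + q2) \<le> \<bar>sgn aK * (Ie + q2)\<bar>" by simp
      also have "\<dots> \<le> 1 * \<bar>Ie + q2\<bar>" unfolding abs_mult by (intro mult_right_mono sb) simp
      also have "\<dots> \<le> \<bar>Ie\<bar> + \<bar>q2\<bar>" by simp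
      finally show ?thesis .
    qed
    ultimately show ?thesis by (simp add: mult.assoc)
  qed
  finally have "- sgn aK * Im (herm (X T) (cis (- lam i1 * T) *s cvec (\<phi> K)))
      \<ge> (\<bar>aK\<bar> / 2) * (1 - gap * T) * u1_L2sq - (\<bar>Ie\<bar> + \<bar>q2\<bar>)"
    unfolding Q .
  moreover have "\<bar>Ie\<bar> \<le> k3 * \<eta> * u1_L2sq + k1 * k1 * u1_L1 * u1_L1" using integral_quad_rem_bound
    by (simp add: Ie_def)
  moreover have "\<bar>q2\<bar> \<le> \<bar>u1 T\<bar> * (nB * (k1 * u1_L1)) + cr * (u1 T)\<^sup>2"
    using gauge_correction_bound by (simp add: q2_def)
  ultimately show ?thesis by linarith
qed

lemma u1_T_sq_le:
  assumes small_eta: "cr * \<eta> \<le> beta / 2"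
  shows "(u1 T)\<^sup>2 \<le> 8 * (dev\<^sup>2 + Ldev\<^sup>2 * u1_L1\<^sup>2) / beta\<^sup>2"
proof -
  have bp: "beta > 0" by (rule beta_pos)
  have "\<bar>u1 T\<bar> \<le> 2 * (dev + Ldev * u1_L1) / beta"
    using abs_u1_T_bound[OF small_eta] bp by (simp add: field_simps)
  then have "(u1 T)\<^sup>2 \<le> (2 * (dev + Ldev * u1_L1) / beta)\<^sup>2"
    using power_mono[of "\<bar>u1 T\<bar>" _ 2] by simp
  also have "\<dots> = 4 * (dev + Ldev * u1_L1)\<^sup>2 / beta\<^sup>2"
    by (simp add: power_divide power2_eq_square algebra_simps)
  also have "\<dots> \<le> 4 * (2 * (dev\<^sup>2 + Ldev\<^sup>2 * u1_L1\<^sup>2)) / beta\<^sup>2"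
  proof -
    have "(dev + Ldev * u1_L1)\<^sup>2 \<le> 2 * (dev\<^sup>2 + Ldev\<^sup>2 * u1_L1\<^sup>2)"
      using sum_squares_ge_zero[of "dev - Ldev * u1_L1" 0] by (simp add: power2_eq_square algebra_simps)
    then show ?thesis using bp by (simp add: divide_right_mono)
  qed
  finally show ?thesis by simp
qed

lemma endpoint_lower_bound:
  assumes small_eta: "cr * \<eta> \<le> beta / 2"
  shows "- sgn aK * Im (herm (X T) (cis (- lam i1 * T) *s cvec (\<phi> K)))
     \<ge> ((\<bar>aK\<bar> / 2) * (1 - gap * T) - k3 * \<eta> - Cerr * T) * u1_L2sq - Cdev * dev\<^sup>2"
proof -
  note vT2 = u1_T_sq_le[OF small_eta]
  have amgm: "\<bar>u1 T\<bar> * (nB * (k1 * u1_L1)) \<le> ((u1 T)\<^sup>2 + (nB * k1 * u1_L1)\<^sup>2) / 2"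
    using sum_squares_ge_zero[of "\<bar>u1 T\<bar> - nB * k1 * u1_L1" 0] by (simp add: power2_eq_square algebra_simps)
  have cr0: "cr + 1/2 \<ge> 0" using constants_nonneg by simp
  have cst: "(cr + 1/2) * (u1 T)\<^sup>2 \<le> Cdev * (dev\<^sup>2 + Ldev\<^sup>2 * u1_L1\<^sup>2)"
  proof -
    have "(cr + 1/2) * (u1 T)\<^sup>2 \<le> (cr + 1/2) * (8 * (dev\<^sup>2 + Ldev\<^sup>2 * u1_L1\<^sup>2) / beta\<^sup>2)"
      using vT2 cr0 by (rule mult_left_mono)
    also have "(cr + 1/2) * (8 * (dev\<^sup>2 + Ldev\<^sup>2 * u1_L1\<^sup>2) / beta\<^sup>2) = Cdev * (dev\<^sup>2 + Ldev\<^sup>2 * u1_L1\<^sup>2)"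
      by (simp add: Cdev_def algebra_simps add_divide_distrib)
    finally show ?thesis .
  qed
  have loss: "k1 * k1 * u1_L1 * u1_L1 + (\<bar>u1 T\<bar> * (nB * (k1 * u1_L1)) + cr * (u1 T)\<^sup>2) \<le> Cerr * u1_L1\<^sup>2
      + Cdev * dev\<^sup>2"
    using amgm cst by (simp add: Cerr_def power2_eq_square algebra_simps)
  have cs: "Cerr * u1_L1\<^sup>2 \<le> Cerr * T * u1_L2sq" using u1_L1_sq_le constants_nonneg
    by (simp add: mult.assoc mult_left_mono)
  have main: "- sgn aK * Im (herm (X T) (cis (- lam i1 * T) *s cvec (\<phi> K)))
     \<ge> (\<bar>aK\<bar> / 2) * (1 - gap * T) * u1_L2sq - (k3 * \<eta> * u1_L2sq + k1 * k1 * u1_L1 * u1_L1)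
       - (\<bar>u1 T\<bar> * (nB * (k1 * u1_L1)) + cr * (u1 T)\<^sup>2)" by (rule endpoint_lower_bound_raw)
  have "((\<bar>aK\<bar> / 2) * (1 - gap * T) - k3 * \<eta> - Cerr * T) * u1_L2sq - Cdev * dev\<^sup>2
      = (\<bar>aK\<bar> / 2) * (1 - gap * T) * u1_L2sq - k3 * \<eta> * u1_L2sq - Cerr * T * u1_L2sq - Cdev * dev\<^sup>2"
    by (simp add: algebra_simps)
  then show ?thesis using main loss cs by linarith
qed

end

section \<open>The coercivity estimate\<close>

context spectral_setting
begin

definition Tmax where "Tmax = \<bar>aK\<bar> / (8 * (\<bar>aK\<bar> / 2 * gap + Cerr + 1))"
definition eta_max where "eta_max = min 1 (min (beta / (2 * (cr + 1))) (\<bar>aK\<bar> / (8 * (k3 + 1))))"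

lemma aK_nonzero: "aK \<noteq> 0"
  using hK1 by (simp add: aK_def)

lemma Tmax_pos: "0 < Tmax"
  unfolding Tmax_def using aK_nonzero constants_nonneg
  by (intro divide_pos_pos mult_pos_pos add_nonneg_pos add_nonneg_nonneg mult_nonneg_nonneg) auto

lemma eta_max_pos: "0 < eta_max"
  using aK_nonzero beta_pos constants_nonneg by (simp add: eta_max_def)

lemma Cdev_pos: "0 < Cdev"
  using beta_pos constants_nonneg by (simp add: Cdev_def)

lemma coercivity_coeff_ge:
  assumes T: "0 < T" "T \<le> Tmax" and eta: "\<eta> \<le> eta_max"
  shows "\<bar>aK\<bar> / 4 \<le> \<bar>aK\<bar> / 2 * (1 - gap * T) - k3 * \<eta> - Cerr * T"
proof -
  define den where "den = \<bar>aK\<bar> / 2 * gap + Cerr + 1"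
  have den: "1 \<le> den" using constants_nonneg by (simp add: den_def)
  have "\<bar>aK\<bar> / 2 * gap * T + Cerr * T \<le> den * T"
    using T constants_nonneg by (simp add: den_def algebra_simps)
  also have "\<dots> \<le> den * (\<bar>aK\<bar> / (8 * den))"
    using T den by (intro mult_left_mono) (auto simp: Tmax_def den_def)
  also have "\<dots> = \<bar>aK\<bar> / 8" using den by simp
  finally have time_part: "\<bar>aK\<bar> / 2 * gap * T + Cerr * T \<le> \<bar>aK\<bar> / 8" .
  have "k3 * \<eta> \<le> k3 * (\<bar>aK\<bar> / (8 * (k3 + 1)))"
    using eta constants_nonneg by (intro mult_left_mono) (auto simp: eta_max_def)
  also have "\<dots> \<le> \<bar>aK\<bar> / 8" using constants_nonneg by (simp add: field_simps)
  finally have "k3 * \<eta> \<le> \<bar>aK\<bar> / 8" .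
  with time_part show ?thesis by (simp add: algebra_simps)
qed

lemma endpoint_estimate:
  assumes a: "a < \<bar>aK\<bar> / 8" and T: "0 < T" "T < Tmax"
    and u: "u absolutely_integrable_on {0..T}"
    and small: "\<forall>t\<in>{0..T}. \<bar>integral {0..t} u\<bar> < eta_max"
    and X: "is_solution H0 H1 u (cvec (\<phi> i1)) T X"
  shows "- sgn aK * Im (herm (X T) (cis (- lam i1 * T) *s cvec (\<phi> K)))
    \<ge> a * integral {0..T} (\<lambda>t. (integral {0..t} u)\<^sup>2)
      - Cdev * (norm (X T - cis (- lam i1 * T) *s cvec (\<phi> i1)))\<^sup>2"
proof -
  interpret small_trajectory H0 H1 \<phi> lam i1 K T u X eta_max
    using T u X small by unfold_locales (auto simp: eta_max_def less_imp_le)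
  have "cr * eta_max \<le> cr * (beta / (2 * (cr + 1)))"
    using constants_nonneg by (intro mult_left_mono) (auto simp: eta_max_def)
  also have "\<dots> \<le> beta / 2" using constants_nonneg beta_pos by (simp add: field_simps)
  finally have small_eta: "cr * eta_max \<le> beta / 2" .
  have "a * u1_L2sq \<le> (\<bar>aK\<bar> / 2 * (1 - gap * T) - k3 * eta_max - Cerr * T) * u1_L2sq"
    using coercivity_coeff_ge[of T eta_max] T a u1_L2sq_nonneg by (intro mult_right_mono) auto
  with endpoint_lower_bound[OF small_eta] show ?thesis
    unfolding u1_L2sq_def u1_def dev_def X1_def x0_def by linarith
qed

end

theorem theorem2p1:
  fixes H0 H1 :: "real^'n^'n"
    and \<phi> :: "'n \<Rightarrow> real^'n"
    and lam :: "'n \<Rightarrow> real"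
    and i1 K :: 'n
  assumes symH0: "transpose H0 = H0"
    and symH1: "transpose H1 = H1"
    and orth: "\<forall>i j. \<phi> i \<bullet> \<phi> j = (if i = j then 1 else 0)"
    and eig: "\<forall>i. H0 *v \<phi> i = lam i *\<^sub>R \<phi> i"
    and hK0: "(H1 *v \<phi> i1) \<bullet> \<phi> K = 0"
    and hK1: "(comm H1 (comm H0 H1) *v \<phi> i1) \<bullet> \<phi> K \<noteq> 0"
  shows "\<exists>C>0. \<forall>a. 0 < a \<and> a < \<bar>(comm H1 (comm H0 H1) *v \<phi> i1) \<bullet> \<phi> K\<bar> / 8 \<longrightarrow>
           (\<exists>Tstar>0. \<forall>T. 0 < T \<and> T < Tstar \<longrightarrow>
             (\<exists>\<eta>>0. \<forall>(u :: real \<Rightarrow> real) X.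
                u absolutely_integrable_on {0..T} \<and>
                (\<forall>t\<in>{0..T}. \<bar>integral {0..t} u\<bar> < \<eta>) \<and>
                is_solution H0 H1 u (cvec (\<phi> i1)) T X \<longrightarrow>
                - sgn ((comm H1 (comm H0 H1) *v \<phi> i1) \<bullet> \<phi> K)
                    * Im (herm (X T) (cis (- lam i1 * T) *s cvec (\<phi> K)))
                  \<ge> a * integral {0..T} (\<lambda>t. (integral {0..t} u)\<^sup>2)
                    - C * (norm (X T - cis (- lam i1 * T) *s cvec (\<phi> i1)))\<^sup>2))"
proof -
  interpret spectral_setting H0 H1 \<phi> lam i1 K
    using assms by unfold_locales
  show ?thesis
    unfolding aK_def[symmetric] using Cdev_pos Tmax_pos eta_max_pos endpoint_estimate by blast
qed

end
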